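(* Let $[a,b]$ be a compact interval and $g:[a,b]\to\mathbb R$ a derivator with only finitely many discontinuity points in $[a,b]$. Then ${\rm P}_g$ is dense in $\mathrm{UC}_g([a,b])$ with respect to the supremum norm.
   Context: $\mathbb F\in\{\mathbb R,\mathbb C\}$. A derivator is a nondecreasing, left-continuous function $g:[a,b]\to\mathbb R$; $\mu_g$ is its Lebesgue–Stieltjes measure, characterized by $\mu_g([c,d))=g(d)-g(c)$ for $a\le c<d\le b$. For $x_0\in[a,b]$, the $g$-monomials centered at $x_0$ are $g_{x_0,0}\equiv1$ and recursively $g_{x_0,n}(x)=n\int_{[x_0,x)}g_{x_0,n-1}\,d\mu_g$ for $x\ge x_0$, $g_{x_0,n}(x)=-n\int_{[x,x_0)}g_{x_0,n-1}\,d\mu_g$ for $x<x_0$. A $g$-polynomial is a finite $\mathbb F$-linear combination of $g$-monomials; ${\rm P}_g$ is the space of $g$-polynomials (for any fixed $x_0$, $\{g_{x_0,n}\}_{n\ge0}$ spans ${\rm P}_g$). $\mathrm{UC}_g([a,b])$ is the Banach space, with the supremum norm, of uniformly $g$-continuous functions $f:[a,b]\to\mathbb F$: for every $\varepsilon>0$ there is $\delta>0$ such that $|g(x)-g(y)|<\delta$ implies $|f(x)-f(y)|<\varepsilon$ for all $x,y\in[a,b]$. *)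

theory Defs
  imports "HOL-Analysis.Analysis"
begin

definition derivator :: "real \<Rightarrow> real \<Rightarrow> (real \<Rightarrow> real) \<Rightarrow> bool" where
  "derivator a b g \<longleftrightarrow> mono_on {a..b} g \<and> (\<forall>x\<in>{a..b}. continuous (at x within {a..x}) g)"

text \<open>Extension of g outside [a,b] by constants (no mass outside [a,b]).\<close>
definition g_ext :: "real \<Rightarrow> real \<Rightarrow> (real \<Rightarrow> real) \<Rightarrow> real \<Rightarrow> real" where
  "g_ext a b g x = g (max a (min b x))"

text \<open>Lebesgue-Stieltjes measure of a left-continuous nondecreasing g, characterised by
  mu_g [c,d) = g d - g c; built by reflecting the (right-continuous) Stieltjes
  measure of x |-> - g(-x).\<close>
definition LS_measure :: "real \<Rightarrow> real \<Rightarrow> (real \<Rightarrow> real) \<Rightarrow> real measure" where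
  "LS_measure a b g = distr (interval_measure (\<lambda>x. - g_ext a b g (- x))) borel uminus"

primrec g_mono :: "real \<Rightarrow> real \<Rightarrow> (real \<Rightarrow> real) \<Rightarrow> real \<Rightarrow> nat \<Rightarrow> real \<Rightarrow> real" where
  "g_mono a b g x0 0 = (\<lambda>x. 1)"
| "g_mono a b g x0 (Suc n) = (\<lambda>x.
     if x0 \<le> x then real (Suc n) * (\<integral>t\<in>{x0..<x}. g_mono a b g x0 n t \<partial>LS_measure a b g)
     else - real (Suc n) * (\<integral>t\<in>{x..<x0}. g_mono a b g x0 n t \<partial>LS_measure a b g))"

definition g_polys :: "real \<Rightarrow> real \<Rightarrow> (real \<Rightarrow> real) \<Rightarrow> (real \<Rightarrow> 'a::real_normed_field) set" where
  "g_polys a b g = {p. \<exists>S c. finite S \<and> S \<subseteq> {a..b} \<times> UNIV \<and>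
      p = (\<lambda>x. \<Sum>(x0, n)\<in>S. c (x0, n) * of_real (g_mono a b g x0 n x))}"

definition UC_g :: "real \<Rightarrow> real \<Rightarrow> (real \<Rightarrow> real) \<Rightarrow> (real \<Rightarrow> 'a::real_normed_vector) set" where
  "UC_g a b g = {f. \<forall>\<epsilon>>0. \<exists>\<delta>>0. \<forall>x\<in>{a..b}. \<forall>y\<in>{a..b}.
      \<bar>g x - g y\<bar> < \<delta> \<longrightarrow> norm (f x - f y) < \<epsilon>}"

end

theory Submission
  imports Defs
begin

text \<open>
  If \<open>g\<close> is continuous, the \<open>g\<close>-monomials centred at \<open>a\<close> are the powers \<open>(g - g a)\<^sup>n\<close>,
  and the Weierstrass theorem applied to the continuous \<open>F\<close> with \<open>f = F \<circ> g\<close> gives density.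
  A discontinuity \<open>d\<close> of \<open>g\<close> is an atom of \<open>\<mu>\<^sub>g\<close> of some mass \<open>J\<close>. Removing the rightmost one
  leaves a derivator \<open>gt = g - J [d < x]\<close> with one discontinuity less, and every \<open>g\<close>-monomial is a
  \<open>gt\<close>-monomial plus \<open>J\<close> times a lower one right of \<open>d\<close>. So
  \<open>c + \<integral>\<^bsub>[a,x)\<^esub> H d\<mu>\<^sub>g\<^sub>t + J H(x) [d < x]\<close> is approximable by \<open>g\<close>-polynomials whenever \<open>H\<close> is
  approximable by \<open>gt\<close>-polynomials, and by induction it suffices to choose \<open>H\<close> making this close to
  \<open>f\<close>: left of \<open>d\<close> from the induction hypothesis, right of \<open>d\<close> by solving \<open>K + J K' = f\<close> along
  \<open>gt\<close>, glued at \<open>d\<close> by a thin ramp whose weight absorbs the mismatch. Field-valued \<open>f\<close> are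
  finally interpolated along \<open>g\<close> by broken lines whose ramps are real-valued.
\<close>

definition ramp :: "real \<Rightarrow> real \<Rightarrow> real \<Rightarrow> real" where
  "ramp u h s = max 0 (min 1 ((s - u) / h))"

lemma ramp_bounds: "0 \<le> ramp u h s" "ramp u h s \<le> 1"
  by (auto simp: ramp_def)

lemma ramp_eq_0: "h > 0 \<Longrightarrow> s \<le> u \<Longrightarrow> ramp u h s = 0"
  by (simp add: ramp_def divide_nonpos_pos)

lemma ramp_eq_1: "h > 0 \<Longrightarrow> u + h \<le> s \<Longrightarrow> ramp u h s = 1"
  by (simp add: ramp_def field_simps)

lemma ramp_lipschitz:
  assumes "h > 0" shows "\<bar>ramp u h s - ramp u h s'\<bar> \<le> \<bar>s - s'\<bar> / h"
proof -
  have "\<bar>ramp u h s - ramp u h s'\<bar> \<le> \<bar>(s - u) / h - (s' - u) / h\<bar>"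
    unfolding ramp_def by (auto simp: max_def min_def abs_if)
  also have "\<dots> = \<bar>s - s'\<bar> / h"
    using assms by (simp add: diff_divide_distrib[symmetric] abs_divide)
  finally show ?thesis .
qed

lemma ramp_measurable [measurable]: "ramp u h \<in> borel_measurable borel"
  unfolding ramp_def by measurable

definition uniformly_continuous_wrt ::
    "(real \<Rightarrow> real) \<Rightarrow> real set \<Rightarrow> (real \<Rightarrow> 'a::real_normed_vector) \<Rightarrow> bool" where
  "uniformly_continuous_wrt \<phi> I f \<longleftrightarrow>
     (\<forall>\<epsilon>>0. \<exists>\<delta>>0. \<forall>x\<in>I. \<forall>y\<in>I. \<bar>\<phi> x - \<phi> y\<bar> < \<delta> \<longrightarrow> norm (f x - f y) < \<epsilon>)"

lemma UC_g_eq: "UC_g a b g = {f. uniformly_continuous_wrt g {a..b} f}"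
  by (simp add: UC_g_def uniformly_continuous_wrt_def)

lemma uniformly_continuous_wrtD:
  assumes "uniformly_continuous_wrt \<phi> I f" "\<epsilon> > 0"
  obtains \<delta> where "\<delta> > 0" "\<And>x y. x \<in> I \<Longrightarrow> y \<in> I \<Longrightarrow> \<bar>\<phi> x - \<phi> y\<bar> < \<delta> \<Longrightarrow> norm (f x - f y) < \<epsilon>"
  using assms unfolding uniformly_continuous_wrt_def by metis

lemma uniformly_continuous_wrt_cong:
  "(\<And>x. x \<in> I \<Longrightarrow> f x = f' x) \<Longrightarrow> uniformly_continuous_wrt \<phi> I f \<longleftrightarrow> uniformly_continuous_wrt \<phi> I f'"
  by (simp add: uniformly_continuous_wrt_def)

lemma uniformly_continuous_wrt_lipschitz:
  assumes "\<And>x y. x \<in> I \<Longrightarrow> y \<in> I \<Longrightarrow> norm (f x - f y) \<le> L * \<bar>\<phi> x - \<phi> y\<bar>"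
  shows "uniformly_continuous_wrt \<phi> I f"
  unfolding uniformly_continuous_wrt_def
proof (intro allI impI)
  fix \<epsilon> :: real assume "\<epsilon> > 0"
  show "\<exists>\<delta>>0. \<forall>x\<in>I. \<forall>y\<in>I. \<bar>\<phi> x - \<phi> y\<bar> < \<delta> \<longrightarrow> norm (f x - f y) < \<epsilon>"
  proof (intro exI conjI ballI impI)
    show "\<epsilon> / (\<bar>L\<bar> + 1) > 0" using \<open>\<epsilon> > 0\<close> by simp
    fix x y assume "x \<in> I" "y \<in> I" and close: "\<bar>\<phi> x - \<phi> y\<bar> < \<epsilon> / (\<bar>L\<bar> + 1)"
    have "norm (f x - f y) \<le> (\<bar>L\<bar> + 1) * \<bar>\<phi> x - \<phi> y\<bar>"
      using assms[OF \<open>x \<in> I\<close> \<open>y \<in> I\<close>] by (smt (verit) abs_ge_self abs_not_less_zero mult_right_mono)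
    also have "\<dots> < \<epsilon>"
      using close by (simp add: field_simps add_pos_nonneg)
    finally show "norm (f x - f y) < \<epsilon>" .
  qed
qed

lemma uniformly_continuous_wrt_comp:
  assumes "uniformly_continuous_on S Q" "\<phi> ` I \<subseteq> S"
  shows "uniformly_continuous_wrt \<phi> I (\<lambda>x. Q (\<phi> x))"
  using assms unfolding uniformly_continuous_wrt_def uniformly_continuous_on_def dist_norm
  by (metis image_subset_iff norm_minus_commute real_norm_def)

lemma uniformly_continuous_wrt_glue:
  assumes mono: "mono_on {c..e} \<phi>" and m: "c \<le> m" "m \<le> e"
    and left: "uniformly_continuous_wrt \<phi> {c..m} f" and right: "uniformly_continuous_wrt \<phi> {m..e} f"
  shows "uniformly_continuous_wrt \<phi> {c..e} f"
  unfolding uniformly_continuous_wrt_def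
proof (intro allI impI)
  fix \<epsilon> :: real assume "\<epsilon> > 0"
  then have "\<epsilon>/2 > 0" by simp
  obtain \<delta>1 where \<delta>1: "\<delta>1 > 0"
    "\<And>x y. x \<in> {c..m} \<Longrightarrow> y \<in> {c..m} \<Longrightarrow> \<bar>\<phi> x - \<phi> y\<bar> < \<delta>1 \<Longrightarrow> norm (f x - f y) < \<epsilon>/2"
    using uniformly_continuous_wrtD[OF left \<open>\<epsilon>/2 > 0\<close>] by blast
  obtain \<delta>2 where \<delta>2: "\<delta>2 > 0"
    "\<And>x y. x \<in> {m..e} \<Longrightarrow> y \<in> {m..e} \<Longrightarrow> \<bar>\<phi> x - \<phi> y\<bar> < \<delta>2 \<Longrightarrow> norm (f x - f y) < \<epsilon>/2"
    using uniformly_continuous_wrtD[OF right \<open>\<epsilon>/2 > 0\<close>] by blast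
  have across: "norm (f x - f y) < \<epsilon>"
    if "x \<in> {c..m}" "y \<in> {m..e}" "\<bar>\<phi> x - \<phi> y\<bar> < min \<delta>1 \<delta>2" for x y
  proof -
    have "\<phi> x \<le> \<phi> m" "\<phi> m \<le> \<phi> y"
      using that m by (auto intro!: mono_onD[OF mono])
    then have "\<bar>\<phi> x - \<phi> m\<bar> < \<delta>1" "\<bar>\<phi> m - \<phi> y\<bar> < \<delta>2"
      using that(3) by auto
    then have "norm (f x - f m) < \<epsilon>/2" "norm (f m - f y) < \<epsilon>/2"
      using \<delta>1(2)[of x m] \<delta>2(2)[of m y] that m by auto
    then show ?thesis using norm_triangle_lt[of "f x - f m" "f m - f y" \<epsilon>] by simp
  qed
  show "\<exists>\<delta>>0. \<forall>x\<in>{c..e}. \<forall>y\<in>{c..e}. \<bar>\<phi> x - \<phi> y\<bar> < \<delta> \<longrightarrow> norm (f x - f y) < \<epsilon>"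
  proof (intro exI conjI ballI impI)
    show "min \<delta>1 \<delta>2 > 0" using \<delta>1 \<delta>2 by simp
    fix x y assume x: "x \<in> {c..e}" and y: "y \<in> {c..e}" and xy: "\<bar>\<phi> x - \<phi> y\<bar> < min \<delta>1 \<delta>2"
    consider "x \<le> m" "y \<le> m" | "m \<le> x" "m \<le> y" | "x \<le> m" "m \<le> y" | "y \<le> m" "m \<le> x"
      by linarith
    then show "norm (f x - f y) < \<epsilon>"
    proof cases
      case 1
      then have "norm (f x - f y) < \<epsilon>/2" using \<delta>1(2)[of x y] x y xy by auto
      then show ?thesis using \<open>\<epsilon> > 0\<close> by linarith
    next
      case 2
      then have "norm (f x - f y) < \<epsilon>/2" using \<delta>2(2)[of x y] x y xy by auto
      then show ?thesis using \<open>\<epsilon> > 0\<close> by linarith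
    next
      case 3 then show ?thesis using across[of x y] x y xy by auto
    next
      case 4 then show ?thesis using across[of y x] x y xy by (auto simp: abs_minus_commute norm_minus_commute)
    qed
  qed
qed

lemma uniformly_continuous_wrt_factor:
  assumes cont: "continuous_on {c..e} \<phi>" and "c \<le> e"
    and f: "uniformly_continuous_wrt \<phi> {c..e} f"
  obtains F where "continuous_on {\<phi> c..\<phi> e} F" "\<And>x. x \<in> {c..e} \<Longrightarrow> f x = F (\<phi> x)"
proof -
  have preimage: "\<exists>x\<in>{c..e}. \<phi> x = s" if "s \<in> {\<phi> c..\<phi> e}" for s
    using IVT'[of \<phi> c s e] that cont \<open>c \<le> e\<close> by auto
  have same: "f x = f y" if "x \<in> {c..e}" "y \<in> {c..e}" "\<phi> x = \<phi> y" for x y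
  proof (rule ccontr)
    assume "f x \<noteq> f y"
    then obtain \<delta> where "\<delta> > 0" and \<delta>: "\<And>u v. u \<in> {c..e} \<Longrightarrow> v \<in> {c..e} \<Longrightarrow>
        \<bar>\<phi> u - \<phi> v\<bar> < \<delta> \<Longrightarrow> norm (f u - f v) < norm (f x - f y)"
      using uniformly_continuous_wrtD[OF f, of "norm (f x - f y)"] by auto
    show False using \<delta>[OF that(1,2)] \<open>\<delta> > 0\<close> that(3) by simp
  qed
  define F where "F s = f (SOME x. x \<in> {c..e} \<and> \<phi> x = s)" for s
  have F: "F (\<phi> x) = f x" if "x \<in> {c..e}" for x
    using someI[of "\<lambda>y. y \<in> {c..e} \<and> \<phi> y = \<phi> x" x] that same unfolding F_def by metis
  have "continuous_on {\<phi> c..\<phi> e} F"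
    unfolding continuous_on_iff
  proof (intro ballI allI impI)
    fix s \<epsilon> :: real assume s: "s \<in> {\<phi> c..\<phi> e}" and "0 < \<epsilon>"
    obtain \<delta> where \<delta>: "\<delta> > 0"
      "\<And>x y. x \<in> {c..e} \<Longrightarrow> y \<in> {c..e} \<Longrightarrow> \<bar>\<phi> x - \<phi> y\<bar> < \<delta> \<Longrightarrow> norm (f x - f y) < \<epsilon>"
      using uniformly_continuous_wrtD[OF f \<open>0 < \<epsilon>\<close>] by blast
    show "\<exists>\<delta>>0. \<forall>s'\<in>{\<phi> c..\<phi> e}. dist s' s < \<delta> \<longrightarrow> dist (F s') (F s) < \<epsilon>"
    proof (intro exI conjI ballI impI)
      fix s' assume s': "s' \<in> {\<phi> c..\<phi> e}" "dist s' s < \<delta>"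
      obtain x x' where "x \<in> {c..e}" "\<phi> x = s" "x' \<in> {c..e}" "\<phi> x' = s'"
        using preimage[OF s] preimage[OF s'(1)] by blast
      then show "dist (F s') (F s) < \<epsilon>"
        using \<delta>(2)[of x' x] s'(2) F by (auto simp: dist_norm dist_real_def)
    qed (rule \<delta>(1))
  qed
  then show ?thesis using F that by metis
qed

lemma mono_on_abs_diff_clamp_le:
  fixes \<psi> :: "real \<Rightarrow> real"
  assumes mono: "mono_on S \<psi>" and "{c..e} \<subseteq> S" "c \<le> e" "x \<in> S" "y \<in> S"
  shows "\<bar>\<psi> (max c (min e x)) - \<psi> (max c (min e y))\<bar> \<le> \<bar>\<psi> x - \<psi> y\<bar>"
proof -
  have ordered: "\<bar>\<psi> (max c (min e u)) - \<psi> (max c (min e v))\<bar> \<le> \<psi> v - \<psi> u"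
    if "u \<le> v" "u \<in> S" "v \<in> S" for u v
  proof (cases "max c (min e u) = max c (min e v)")
    case True
    then show ?thesis using mono_onD[OF mono that(2,3,1)] by simp
  next
    case False
    then have "u \<le> max c (min e u)" "max c (min e u) \<le> max c (min e v)" "max c (min e v) \<le> v"
      using that(1) \<open>c \<le> e\<close> by (auto simp: max_def min_def split: if_splits)
    moreover have "max c (min e u) \<in> S" "max c (min e v) \<in> S"
      using \<open>{c..e} \<subseteq> S\<close> \<open>c \<le> e\<close> by auto
    ultimately show ?thesis
      using mono_onD[OF mono] that(2,3) by (smt (verit))
  qed
  show ?thesis
    using ordered[of x y] ordered[of y x] assms(4,5) by (cases "x \<le> y") (auto simp: abs_minus_commute)
qed

lemma uniformly_continuous_wrt_clamp:
  fixes \<phi> \<psi> :: "real \<Rightarrow> real"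
  assumes f: "uniformly_continuous_wrt \<phi> I f" and mono: "mono_on S \<psi>"
    and ce: "c \<le> e" "{c..e} \<subseteq> S" "{c..e} \<subseteq> I" and shift: "\<And>x. x \<in> {c..e} \<Longrightarrow> \<phi> x = \<psi> x + J"
  shows "uniformly_continuous_wrt \<psi> S (\<lambda>x. f (max c (min e x)))"
  unfolding uniformly_continuous_wrt_def
proof (intro allI impI)
  fix \<epsilon> :: real assume "\<epsilon> > 0"
  then obtain \<delta> where \<delta>: "\<delta> > 0"
    "\<And>x y. x \<in> I \<Longrightarrow> y \<in> I \<Longrightarrow> \<bar>\<phi> x - \<phi> y\<bar> < \<delta> \<Longrightarrow> norm (f x - f y) < \<epsilon>"
    using uniformly_continuous_wrtD[OF f] by metis
  have "norm (f (max c (min e x)) - f (max c (min e y))) < \<epsilon>"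
    if "x \<in> S" "y \<in> S" "\<bar>\<psi> x - \<psi> y\<bar> < \<delta>" for x y
  proof -
    have "max c (min e x) \<in> {c..e}" "max c (min e y) \<in> {c..e}"
      using ce by auto
    moreover from this have "\<bar>\<phi> (max c (min e x)) - \<phi> (max c (min e y))\<bar> < \<delta>"
      using mono_on_abs_diff_clamp_le[OF mono ce(2,1) that(1,2)] that(3) by (simp add: shift)
    ultimately show ?thesis using \<delta>(2) ce(3) by blast
  qed
  then show "\<exists>\<delta>>0. \<forall>x\<in>S. \<forall>y\<in>S. \<bar>\<psi> x - \<psi> y\<bar> < \<delta> \<longrightarrow>
      norm (f (max c (min e x)) - f (max c (min e y))) < \<epsilon>"
    using \<delta>(1) by blast
qed

lemma linear_ode_solution:
  fixes T :: "real \<Rightarrow> real"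
  assumes T: "continuous_on {s0..s1} T" and J: "J > 0" and "s0 \<le> s1"
  obtains K Q where "K s0 = 0" "continuous_on UNIV Q" "bounded (range Q)"
    "\<And>s. s \<in> {s0..s1} \<Longrightarrow> (K has_real_derivative Q s) (at s within {s0..s1})"
    "\<And>s. s \<in> {s0..s1} \<Longrightarrow> K s + J * Q s = T s"
proof -
  \<comment> \<open>variation of constants for \<open>K + J K' = T\<close>, \<open>K s0 = 0\<close>\<close>
  define \<phi> where "\<phi> r = exp (r / J) * T r / J" for r
  define K where "K s = exp (- s / J) * integral {s0..s} \<phi>" for s
  define Q where "Q s = (T s - K s) / J" for s
  define cl where "cl s = max s0 (min s1 s)" for s
  have \<phi>: "continuous_on {s0..s1} \<phi>"
    unfolding \<phi>_def using J by (intro continuous_intros T) auto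
  have K': "(K has_real_derivative Q s) (at s within {s0..s1})" if s: "s \<in> {s0..s1}" for s
  proof -
    have I: "((\<lambda>u. integral {s0..u} \<phi>) has_real_derivative \<phi> s) (at s within {s0..s1})"
      using integral_has_vector_derivative[OF \<phi> s]
      by (simp add: has_real_derivative_iff_has_vector_derivative)
    have "(K has_real_derivative exp (- s / J) * (- 1 / J) * integral {s0..s} \<phi> + exp (- s / J) * \<phi> s)
        (at s within {s0..s1})"
      unfolding K_def using J by (auto intro!: derivative_eq_intros I)
    moreover have "exp (- s / J) * (- 1 / J) * integral {s0..s} \<phi> + exp (- s / J) * \<phi> s = Q s"
      using J by (simp add: Q_def K_def \<phi>_def field_simps exp_minus_inverse[symmetric] exp_add[symmetric])
    ultimately show ?thesis by simp
  qed
  have "continuous_on {s0..s1} K"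
    unfolding continuous_on_eq_continuous_within using K' by (blast intro: DERIV_continuous)
  then have Q: "continuous_on {s0..s1} Q"
    unfolding Q_def using J by (intro continuous_intros T) auto
  have cl: "cl s \<in> {s0..s1}" for s using \<open>s0 \<le> s1\<close> by (auto simp: cl_def)
  have cl_id: "s \<in> {s0..s1} \<Longrightarrow> cl s = s" for s by (auto simp: cl_def)
  have "continuous_on UNIV (\<lambda>s. Q (cl s))"
    by (rule continuous_on_compose2[OF Q]) (use \<open>s0 \<le> s1\<close> in \<open>auto simp: cl_def intro!: continuous_intros\<close>)
  moreover have "bounded (range (\<lambda>s. Q (cl s)))"
    by (rule bounded_subset[OF compact_imp_bounded[OF compact_continuous_image[OF Q compact_Icc]]])
      (use cl in auto)
  moreover have "K s + J * Q (cl s) = T s" if "s \<in> {s0..s1}" for s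
    using that J by (simp add: cl_id Q_def)
  ultimately show ?thesis
    using that[of K "\<lambda>s. Q (cl s)"] K' by (simp add: K_def cl_id)
qed

lemma (in finite_measure) integrable_indicator_mult:
  fixes h :: "'a \<Rightarrow> real"
  assumes "h \<in> borel_measurable M" "A \<in> sets M" "\<And>x. x \<in> A \<Longrightarrow> \<bar>h x\<bar> \<le> B"
  shows "integrable M (\<lambda>t. indicator A t * h t)"
proof -
  have "emeasure M A < \<infinity>"
    by (simp add: less_top[symmetric])
  then show ?thesis
    using integrableI_bounded_set_indicator[OF assms(2,1) _, of B] assms(3) by (simp add: AE_I2)
qed

lemma (in finite_measure) abs_integral_indicator_mult_le:
  fixes h :: "'a \<Rightarrow> real"
  assumes "h \<in> borel_measurable M" "A \<in> sets M" "\<And>x. x \<in> A \<Longrightarrow> \<bar>h x\<bar> \<le> B"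
  shows "\<bar>\<integral>t. indicator A t * h t \<partial>M\<bar> \<le> B * measure M A"
proof -
  have "\<bar>\<integral>t. indicator A t * h t \<partial>M\<bar> \<le> (\<integral>t. \<bar>indicator A t * h t\<bar> \<partial>M)"
    by (rule integral_abs_bound)
  also have "\<dots> \<le> (\<integral>t. indicator A t * B \<partial>M)"
    using assms(3) assms(2)
    by (intro integral_mono integrable_abs integrable_indicator_mult[OF assms] integrable_mult_left
        integrable_real_indicator) (auto simp: indicator_def less_top[symmetric])
  also have "\<dots> = B * measure M A"
    using assms(2) by simp
  finally show ?thesis .
qed

lemma measure_eqI_Iio:
  fixes M N :: "real measure"
  assumes sets: "sets M = sets borel" "sets N = sets borel"
    and fin: "\<And>x. emeasure M {..<x} < \<infinity>"
    and eq: "\<And>x. emeasure M {..<x} = emeasure N {..<x}"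
  shows "M = N"
proof (rule measure_eqI_generator_eq_countable)
  let ?E = "range (\<lambda>a::real. {..<a})"
  show "Int_stable ?E"
  proof (rule Int_stableI)
    fix A B assume "A \<in> ?E" "B \<in> ?E"
    then obtain x y where "A = {..<x}" "B = {..<y}" by auto
    then show "A \<inter> B \<in> ?E" by (intro image_eqI[of _ _ "min x y"]) auto
  qed
  show "?E \<subseteq> Pow UNIV" "sets M = sigma_sets UNIV ?E" "sets N = sigma_sets UNIV ?E"
    unfolding sets borel_Iio by auto
  show "(\<lambda>a. {..<a}) ` \<rat> \<subseteq> ?E" "\<And>A. A \<in> (\<lambda>a. {..<a}) ` \<rat> \<Longrightarrow> emeasure M A \<noteq> \<infinity>"
    using fin by (auto simp: less_top)
  have "y \<in> (\<Union>i\<in>\<rat>. {..<i})" for y :: real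
  proof -
    obtain q where "q \<in> \<rat>" "y < q"
      using Rats_dense_in_real[of y "y + 1"] by auto
    then show ?thesis by (intro UN_I[of q]) simp_all
  qed
  then show "(\<Union>i\<in>\<rat>. {..<i::real}) = UNIV" by (intro UNIV_eq_I[symmetric])
qed (auto intro: eq countable_rat)

section \<open>The Lebesgue-Stieltjes measure of a derivator\<close>

locale derivator_interval =
  fixes a b :: real and g :: "real \<Rightarrow> real"
  assumes derivator: "derivator a b g" and a_le_b: "a \<le> b"
begin

abbreviation "G \<equiv> g_ext a b g"
abbreviation "\<mu> \<equiv> LS_measure a b g"
abbreviation "gm \<equiv> g_mono a b g a"

lemma mono_on_g: "mono_on {a..b} g"
  using derivator by (simp add: derivator_def)

lemma G_mono: "x \<le> y \<Longrightarrow> G x \<le> G y"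
  unfolding g_ext_def using a_le_b by (intro mono_onD[OF mono_on_g]) auto

lemma G_eq: "x \<in> {a..b} \<Longrightarrow> G x = g x"
  by (simp add: g_ext_def)

lemma G_left: "x \<le> a \<Longrightarrow> G x = g a"
  using a_le_b by (simp add: g_ext_def)

lemma G_right: "b \<le> x \<Longrightarrow> G x = g b"
  using a_le_b by (simp add: g_ext_def)

lemma G_bounds: "g a \<le> G x" "G x \<le> g b"
  using G_mono[of "min a x" x] G_left[of "min a x"] G_mono[of x "max b x"] G_right[of "max b x"]
  by simp_all

lemma g_mono_le: "x \<in> {a..b} \<Longrightarrow> y \<in> {a..b} \<Longrightarrow> x \<le> y \<Longrightarrow> g x \<le> g y"
  using mono_onD[OF mono_on_g] by blast

lemma G_measurable [measurable]: "G \<in> borel_measurable borel"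
  by (rule borel_measurable_mono) (auto simp: mono_def G_mono)

lemma G_continuous_at_left: "continuous (at_left x) G"
proof -
  consider "x \<le> a" | "a < x" "x \<le> b" | "b < x" by linarith
  then show ?thesis
  proof cases
    case 1
    have "\<forall>\<^sub>F y in at_left x. G y = G x"
      by (rule eventually_at_leftI[of "x - 1"]) (use 1 in \<open>auto simp: G_left\<close>)
    then show ?thesis unfolding continuous_within by (rule tendsto_eventually)
  next
    case 2
    have c: "continuous (at x within {a..x}) g"
      using derivator 2 by (auto simp: derivator_def)
    have e: "at_left x = at x within {a<..<x}"
    proof (rule at_within_nhd[of _ "{a<..}"])
      show "{..<x} \<inter> {a<..} - {x} = {a<..<x} \<inter> {a<..} - {x}" by auto
    qed (use 2 in auto)
    have "(g \<longlongrightarrow> g x) (at x within {a<..<x})"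
      using c unfolding continuous_within by (rule tendsto_within_subset) auto
    moreover have "\<forall>\<^sub>F y in at x within {a<..<x}. G y = g y"
      unfolding eventually_at_filter using 2 by (intro always_eventually) (auto simp: G_eq)
    ultimately have "(G \<longlongrightarrow> g x) (at x within {a<..<x})"
      using tendsto_cong[of G g "at x within {a<..<x}" "g x"] by simp
    then show ?thesis unfolding continuous_within e using 2 by (simp add: G_eq)
  next
    case 3
    have "\<forall>\<^sub>F y in at_left x. G y = G x"
      by (rule eventually_at_leftI[of b]) (use 3 in \<open>auto simp: G_right\<close>)
    then show ?thesis unfolding continuous_within by (rule tendsto_eventually)
  qed
qed

lemma sets_mu [simp, measurable_cong]: "sets \<mu> = sets borel"
  by (simp add: LS_measure_def)

lemma space_mu [simp]: "space \<mu> = UNIV"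
  by (simp add: LS_measure_def)

lemma emeasure_mu_Ico:
  assumes "c \<le> e" shows "emeasure \<mu> {c..<e} = ennreal (G e - G c)"
proof -
  define F where "F = (\<lambda>x. - G (- x))"
  have F_mono: "F x \<le> F y" if "x \<le> y" for x y
    using G_mono that by (simp add: F_def)
  have F_right_cont: "continuous (at_right x) F" for x
  proof -
    have "((\<lambda>y. - G y) \<longlongrightarrow> - G (- x)) (at_left (- x))"
      using G_continuous_at_left[of "- x"] by (intro tendsto_minus) (simp add: continuous_within)
    then have "((\<lambda>y. - G (- y)) \<longlongrightarrow> - G (- x)) (at_right x)"
      unfolding at_right_minus[of x] filterlim_filtermap by simp
    then show ?thesis
      unfolding continuous_within F_def by simp
  qed
  have m: "(uminus :: real \<Rightarrow> real) \<in> measurable (interval_measure F) borel"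
    by (subst measurable_cong_sets[OF sets_interval_measure refl]) measurable
  have "emeasure \<mu> {c..<e} = emeasure (interval_measure F) (uminus -` {c..<e})"
    unfolding LS_measure_def F_def[symmetric] by (subst emeasure_distr[OF m]) auto
  also have "uminus -` {c..<e} = {-e<..-c}"
    by auto
  also have "emeasure (interval_measure F) {-e<..-c} = F (-c) - F (-e)"
    using assms by (intro emeasure_interval_measure_Ioc F_mono F_right_cont) auto
  finally show ?thesis by (simp add: F_def)
qed

lemma emeasure_mu_lessThan: "emeasure \<mu> {..<x} = ennreal (G x - g a)"
proof -
  have "(\<Union>n::nat. {x - real n..<x}) = {..<x}"
  proof safe
    fix y assume "y < x"
    obtain n :: nat where "x - y \<le> real n" using real_arch_simple by blast
    then show "y \<in> (\<Union>n::nat. {x - real n..<x})" using \<open>y < x\<close> by (intro UN_I[of n]) auto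
  qed auto
  then have "emeasure \<mu> {..<x} = (SUP n::nat. emeasure \<mu> {x - real n..<x})"
    using SUP_emeasure_incseq[of "\<lambda>n. {x - real n..<x}" \<mu>]
    by (simp add: incseq_def image_subset_iff)
  also have "\<dots> = (SUP n::nat. ennreal (G x - G (x - real n)))"
    by (simp add: emeasure_mu_Ico)
  also have "\<dots> = ennreal (G x - g a)"
  proof (rule antisym)
    show "(SUP n::nat. ennreal (G x - G (x - real n))) \<le> ennreal (G x - g a)"
      using G_bounds by (intro SUP_least ennreal_leI) auto
    obtain n :: nat where n: "x - a \<le> real n" using real_arch_simple by blast
    have "ennreal (G x - g a) = ennreal (G x - G (x - real n))"
      using n by (simp add: G_left)
    also have "\<dots> \<le> (SUP n::nat. ennreal (G x - G (x - real n)))"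
      by (rule SUP_upper) auto
    finally show "ennreal (G x - g a) \<le> (SUP n::nat. ennreal (G x - G (x - real n)))" .
  qed
  finally show ?thesis .
qed

sublocale mu: finite_measure \<mu>
proof
  have "y \<in> (\<Union>n::nat. {..<real n})" for y :: real
  proof -
    obtain n :: nat where "y < real n" using reals_Archimedean2 by blast
    then show ?thesis by (intro UN_I[of n]) simp_all
  qed
  then have "(\<Union>n::nat. {..<real n}) = UNIV"
    by (intro UNIV_eq_I[symmetric])
  then have "emeasure \<mu> UNIV = (SUP n::nat. emeasure \<mu> {..<real n})"
    using SUP_emeasure_incseq[of "\<lambda>n. {..<real n}" \<mu>] by (simp add: incseq_def image_subset_iff)
  also have "\<dots> \<le> ennreal (g b - g a)"
    using G_bounds by (intro SUP_least) (auto simp: emeasure_mu_lessThan intro!: ennreal_leI)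
  finally show "emeasure \<mu> (space \<mu>) \<noteq> \<infinity>"
    by (auto simp: top_unique)
qed

lemma measure_mu_Ico: "c \<le> e \<Longrightarrow> measure \<mu> {c..<e} = G e - G c"
  by (simp add: measure_def emeasure_mu_Ico G_mono)

lemma integrable_mu:
  fixes h :: "real \<Rightarrow> real"
  assumes "h \<in> borel_measurable borel" "A \<in> sets borel" "\<And>x. x \<in> A \<Longrightarrow> \<bar>h x\<bar> \<le> B"
  shows "integrable \<mu> (\<lambda>t. indicator A t * h t)"
  using assms by (intro mu.integrable_indicator_mult) auto

lemma abs_integral_mu_le:
  fixes h :: "real \<Rightarrow> real"
  assumes "h \<in> borel_measurable borel" "A \<in> sets borel" "\<And>x. x \<in> A \<Longrightarrow> \<bar>h x\<bar> \<le> B"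
  shows "\<bar>\<integral>t. indicator A t * h t \<partial>\<mu>\<bar> \<le> B * measure \<mu> A"
  using assms by (intro mu.abs_integral_indicator_mult_le) auto

lemma measure_superlevel_le:
  assumes "a \<le> e"
  shows "measure \<mu> {t \<in> {a..<e}. v < G t} \<le> max 0 (G e - v)"
proof -
  define U where "U = {t \<in> {a..<e}. v < G t}"
  have up: "t' \<in> U" if "t \<in> U" "t \<le> t'" "t' < e" for t t'
    using that G_mono[of t t'] by (auto simp: U_def)
  have "measure \<mu> U \<le> max 0 (G e - v)"
  proof (cases "U = {}")
    case False
    have bdd: "bdd_below U" by (auto simp: U_def intro!: bdd_belowI[of _ a])
    define \<tau> where "\<tau> = Inf U"
    have \<tau>_le: "\<tau> \<le> t" if "t \<in> U" for t
      unfolding \<tau>_def by (rule cInf_lower[OF that bdd])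
    have in_U: "t \<in> U" if "\<tau> < t" "t < e" for t
      using cInf_lessD[OF False, of t] that up unfolding \<tau>_def by (meson less_le_not_le)
    show ?thesis
    proof (cases "\<tau> \<in> U")
      case True
      then have "U = {\<tau>..<e}" "v < G \<tau>" "\<tau> < e"
        using \<tau>_le up[OF True] by (auto simp: U_def)
      then show ?thesis by (simp add: measure_mu_Ico)
    next
      case False
      \<comment> \<open>\<open>U = {\<tau><..<e}\<close> is exhausted by the intervals \<open>[\<tau> + 1/(n+1), e)\<close>, each inside \<open>U\<close>\<close>
      define A where "A n = {\<tau> + 1 / Suc n..<e}" for n :: nat
      have "incseq A"
        unfolding A_def incseq_def by (auto intro!: order_trans[OF _ divide_left_mono] simp: frac_le)
      moreover have "(\<Union>n. A n) = U"
      proof safe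
        fix t n assume "t \<in> A n"
        then show "t \<in> U" using in_U[of t] by (simp add: A_def) (smt (verit) of_nat_0_le_iff divide_pos_pos)
      next
        fix t assume t: "t \<in> U"
        then have "\<tau> < t" using \<tau>_le[OF t] False by (cases "\<tau> = t") auto
        then obtain n where "1 / Suc n < t - \<tau>" by (metis diff_gt_0_iff_gt nat_approx_posE)
        then have "t \<in> A n" using t by (auto simp: A_def U_def)
        then show "t \<in> (\<Union>n. A n)" by blast
      qed
      ultimately have "(\<lambda>n. measure \<mu> (A n)) \<longlonglongrightarrow> measure \<mu> U"
        using mu.finite_Lim_measure_incseq[of A] by (simp add: A_def image_subset_iff)
      moreover have "measure \<mu> (A n) \<le> max 0 (G e - v)" for n
      proof (cases "\<tau> + 1 / Suc n < e")
        case True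
        then have "v < G (\<tau> + 1 / Suc n)" using in_U[of "\<tau> + 1 / Suc n"] by (simp add: U_def)
        then show ?thesis using True by (simp add: A_def measure_mu_Ico)
      qed (simp add: A_def)
      ultimately show ?thesis by (intro LIMSEQ_le_const2) auto
    qed
  qed simp
  then show ?thesis by (simp add: U_def)
qed

section \<open>The \<open>g\<close>-monomials\<close>

definition g_integral :: "(real \<Rightarrow> real) \<Rightarrow> real \<Rightarrow> real" where
  "g_integral h x = (\<integral>t. indicator {a..<x} t * h t \<partial>\<mu>)"

lemma gm_Suc: "gm (Suc n) x = (if a \<le> x then real (Suc n) * g_integral (gm n) x else 0)"
proof (cases "a \<le> x")
  case False
  have "emeasure \<mu> {x..<a} = 0"
    using False by (simp add: emeasure_mu_Ico G_left)
  then have "AE t in \<mu>. indicator {x..<a} t * gm n t = 0"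
    by (intro AE_I'[of "{x..<a}"]) (auto simp: null_sets_def split: split_indicator)
  then show ?thesis
    using False by (simp add: set_lebesgue_integral_def integral_eq_zero_AE)
qed (simp add: g_integral_def set_lebesgue_integral_def)

declare g_mono.simps(2) [simp del]

lemma g_integral_diff:
  fixes h :: "real \<Rightarrow> real"
  assumes h: "h \<in> borel_measurable borel" "\<And>t. \<bar>h t\<bar> \<le> B" and "a \<le> x" "x \<le> y"
  shows "g_integral h y - g_integral h x = (\<integral>t. indicator {x..<y} t * h t \<partial>\<mu>)"
proof -
  have "g_integral h y - g_integral h x =
      (\<integral>t. indicator {a..<y} t * h t - indicator {a..<x} t * h t \<partial>\<mu>)"
    unfolding g_integral_def by (intro Bochner_Integration.integral_diff[symmetric] integrable_mu[OF h(1) _ h(2)]) auto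
  also have "\<dots> = (\<integral>t. indicator {x..<y} t * h t \<partial>\<mu>)"
    using assms by (intro Bochner_Integration.integral_cong) (auto simp: indicator_def)
  finally show ?thesis .
qed

lemma g_integral_sum:
  fixes h :: "nat \<Rightarrow> real \<Rightarrow> real"
  assumes "\<And>n. h n \<in> borel_measurable borel" "\<And>n. \<exists>B. \<forall>t. \<bar>h n t\<bar> \<le> B"
  shows "g_integral (\<lambda>t. \<Sum>n<N. q n * h n t) x = (\<Sum>n<N. q n * g_integral (h n) x)"
proof -
  have "integrable \<mu> (\<lambda>t. indicator {a..<x} t * h n t)" for n
    using assms(2)[of n] by (auto intro: integrable_mu[OF assms(1)])
  then show ?thesis
    unfolding g_integral_def
    by (simp add: sum_distrib_left mult.left_commute Bochner_Integration.integral_sum[symmetric])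
qed

lemma gm_mono_nonneg_bounded: "mono (gm n) \<and> (\<forall>x. 0 \<le> gm n x) \<and> (\<exists>B. \<forall>x. gm n x \<le> B)"
proof (induction n)
  case 0 then show ?case by (auto simp: mono_def)
next
  case (Suc n)
  then obtain B where mo: "mono (gm n)" and nn: "\<And>x. 0 \<le> gm n x" and bd: "\<And>x. gm n x \<le> B"
    by auto
  have h: "gm n \<in> borel_measurable borel" "\<And>t. \<bar>gm n t\<bar> \<le> B"
    using mo nn bd by (auto intro: borel_measurable_mono simp: abs_of_nonneg)
  have I_nonneg: "0 \<le> g_integral (gm n) x" for x
    unfolding g_integral_def using nn by (intro integral_nonneg_AE) auto
  have I_mono: "g_integral (gm n) x \<le> g_integral (gm n) y" if "a \<le> x" "x \<le> y" for x y
  proof -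
    have "0 \<le> (\<integral>t. indicator {x..<y} t * gm n t \<partial>\<mu>)"
      using nn by (intro integral_nonneg_AE) auto
    then show ?thesis using g_integral_diff[OF h that] by simp
  qed
  have I_bounded: "g_integral (gm n) x \<le> B * (g b - g a)" for x
  proof -
    have "g_integral (gm n) x \<le> B * measure \<mu> {a..<x}"
      using abs_integral_mu_le[OF h(1) _ h(2), of "{a..<x}"] by (simp add: g_integral_def)
    also have "measure \<mu> {a..<x} \<le> g b - g a"
      using G_bounds[of a] G_bounds[of x] measure_mu_Ico[of a x] G_left[of a] by (cases "a \<le> x") auto
    then have "B * measure \<mu> {a..<x} \<le> B * (g b - g a)"
      using nn[of 0] bd[of 0] by (intro mult_left_mono) auto
    finally show ?thesis .
  qed
  have "mono (gm (Suc n))"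
    by (rule monoI) (auto simp: gm_Suc intro!: mult_left_mono mult_nonneg_nonneg I_mono I_nonneg)
  moreover have "0 \<le> gm (Suc n) x" for x
    by (simp add: gm_Suc I_nonneg)
  moreover have "gm (Suc n) x \<le> real (Suc n) * (B * (g b - g a))" for x
    using I_bounded I_nonneg[of x] nn[of 0] bd[of 0] G_bounds[of a]
    by (auto simp: gm_Suc intro!: mult_left_mono mult_nonneg_nonneg)
  ultimately show ?case by blast
qed

lemma gm_measurable [measurable]: "gm n \<in> borel_measurable borel"
  using gm_mono_nonneg_bounded[of n] by (intro borel_measurable_mono) auto

lemma gm_nonneg: "0 \<le> gm n x"
  using gm_mono_nonneg_bounded[of n] by auto

lemma gm_bounded: "\<exists>B. \<forall>x. \<bar>gm n x\<bar> \<le> B"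
  using gm_mono_nonneg_bounded[of n] gm_nonneg by (auto simp: abs_of_nonneg)

lemma gm_lipschitz: "\<exists>C. \<forall>x y. x \<le> y \<longrightarrow> \<bar>gm n y - gm n x\<bar> \<le> C * (G y - G x)"
proof (cases n)
  case 0 then show ?thesis by (auto intro!: exI[of _ 0])
next
  case (Suc m)
  obtain B where B: "\<And>t. \<bar>gm m t\<bar> \<le> B" using gm_bounded by blast
  have on_right: "\<bar>gm n y - gm n x\<bar> \<le> real (Suc m) * B * (G y - G x)" if "a \<le> x" "x \<le> y" for x y
  proof -
    have "\<bar>gm n y - gm n x\<bar> = real (Suc m) * \<bar>\<integral>t. indicator {x..<y} t * gm m t \<partial>\<mu>\<bar>"
      using that Suc g_integral_diff[OF gm_measurable B that]
      by (simp add: gm_Suc abs_mult right_diff_distrib[symmetric])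
    also have "\<dots> \<le> real (Suc m) * (B * measure \<mu> {x..<y})"
      by (intro mult_left_mono abs_integral_mu_le[OF gm_measurable _ B]) auto
    finally show ?thesis using that by (simp add: measure_mu_Ico)
  qed
  show ?thesis
  proof (intro exI allI impI)
    fix x y :: real assume xy: "x \<le> y"
    consider "y < a" | "x < a" "a \<le> y" | "a \<le> x" by linarith
    then show "\<bar>gm n y - gm n x\<bar> \<le> real (Suc m) * B * (G y - G x)"
    proof cases
      case 1 then show ?thesis using Suc xy by (simp add: gm_Suc G_left)
    next
      case 2
      have "gm n x = gm n a" "G x = G a"
        using 2 Suc by (simp_all add: gm_Suc g_integral_def G_left)
      then show ?thesis using on_right[of a y] 2 by simp
    next
      case 3 then show ?thesis using on_right xy by simp
    qed
  qed
qed

lemma sum_gm_bounded: "\<exists>B. \<forall>t. \<bar>\<Sum>n<N. q n * gm n t\<bar> \<le> B"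
proof -
  obtain B where B: "\<And>n t. \<bar>gm n t\<bar> \<le> B n"
    using gm_bounded by metis
  have "\<bar>\<Sum>n<N. q n * gm n t\<bar> \<le> (\<Sum>n<N. \<bar>q n\<bar> * B n)" for t
    by (rule order_trans[OF sum_abs sum_mono]) (auto simp: abs_mult intro!: mult_left_mono B)
  then show ?thesis by blast
qed

lemma sum_gm_lipschitz:
  "\<exists>C. \<forall>x y. x \<le> y \<longrightarrow> \<bar>(\<Sum>n<N. q n * gm n y) - (\<Sum>n<N. q n * gm n x)\<bar> \<le> C * (G y - G x)"
proof -
  obtain C where C: "\<And>n x y. x \<le> y \<Longrightarrow> \<bar>gm n y - gm n x\<bar> \<le> C n * (G y - G x)"
    using gm_lipschitz by metis
  have "\<bar>(\<Sum>n<N. q n * gm n y) - (\<Sum>n<N. q n * gm n x)\<bar> \<le> (\<Sum>n<N. \<bar>q n\<bar> * C n) * (G y - G x)"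
    if "x \<le> y" for x y
  proof -
    have "\<bar>(\<Sum>n<N. q n * gm n y) - (\<Sum>n<N. q n * gm n x)\<bar> \<le> (\<Sum>n<N. \<bar>q n * (gm n y - gm n x)\<bar>)"
      by (simp add: sum_subtractf[symmetric] right_diff_distrib sum_abs)
    also have "\<dots> \<le> (\<Sum>n<N. \<bar>q n\<bar> * C n * (G y - G x))"
      using C[OF that] by (intro sum_mono) (simp add: abs_mult mult.assoc mult_left_mono)
    finally show ?thesis by (simp add: sum_distrib_right)
  qed
  then show ?thesis by blast
qed

lemma sum_gm_eq_g_integral:
  assumes "a \<le> x"
  shows "(\<Sum>n<Suc N. q n * gm n x) = q 0 + g_integral (\<lambda>t. \<Sum>n<N. q (Suc n) * real (Suc n) * gm n t) x"
proof -
  have "g_integral (\<lambda>t. \<Sum>n<N. q (Suc n) * real (Suc n) * gm n t) x =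
      (\<Sum>n<N. q (Suc n) * real (Suc n) * g_integral (gm n) x)"
    by (rule g_integral_sum) (auto intro: gm_bounded)
  also have "\<dots> = (\<Sum>n<N. q (Suc n) * gm (Suc n) x)"
    using assms by (intro sum.cong refl) (simp add: gm_Suc)
  finally show ?thesis unfolding sum.lessThan_Suc_shift by simp
qed

section \<open>Change of variables along \<open>g\<close>\<close>

lemma distr_G_eq_lborel:
  assumes cont: "continuous_on {c..x} g" and "a \<le> c" "c \<le> x" "x \<le> b"
  shows "distr (density \<mu> (indicator {c..<x})) borel G = density lborel (indicator {G c..<G x})"
    (is "?N = ?L")
proof (rule measure_eqI_Iio[symmetric])
  have Gcx: "G c \<le> G x" using G_mono \<open>c \<le> x\<close> by simp
  have contG: "continuous_on {c..x} G"
    using cont by (rule continuous_on_eq) (use assms in \<open>auto simp: G_eq\<close>)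
  have emL: "emeasure ?L {..<s} = emeasure lborel ({..<s} \<inter> {G c..<G x})" for s
    by (simp add: emeasure_restricted Int_commute)
  show "emeasure ?L {..<s} < \<infinity>" for s
  proof -
    have "emeasure ?L {..<s} \<le> emeasure lborel {G c..<G x}"
      by (simp add: emL emeasure_mono)
    also have "\<dots> < \<infinity>" using Gcx by simp
    finally show ?thesis .
  qed
  show "emeasure ?L {..<s} = emeasure ?N {..<s}" for s
  proof -
    have N: "emeasure ?N {..<s} = emeasure \<mu> (G -` {..<s} \<inter> {c..<x})"
      using measurable_sets[OF G_measurable, of "{..<s}"]
      by (simp add: emeasure_distr emeasure_restricted Int_commute)
    consider "s \<le> G c" | "G x < s" | "G c < s" "s \<le> G x" by linarith
    then show ?thesis
    proof cases
      case 1
      have "\<not> G t < s" if "c \<le> t" for t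
        using G_mono[OF that] 1 by linarith
      then have "G -` {..<s} \<inter> {c..<x} = {}" "{..<s} \<inter> {G c..<G x} = {}"
        using 1 by auto
      then show ?thesis using N emL by simp
    next
      case 2
      have "G t < s" if "t < x" for t
        using G_mono[of t x] that 2 by linarith
      then have "G -` {..<s} \<inter> {c..<x} = {c..<x}" "{..<s} \<inter> {G c..<G x} = {G c..<G x}"
        using 2 by auto
      then show ?thesis using N emL Gcx \<open>c \<le> x\<close> by (simp add: emeasure_mu_Ico)
    next
      case 3
      \<comment> \<open>the preimage of \<open>{..<s}\<close> is \<open>{c..<\<sigma>}\<close>, \<open>\<sigma>\<close> the first point where \<open>G\<close> reaches \<open>s\<close>\<close>
      let ?S = "{t \<in> {c..x}. G t = s}"
      have "?S \<noteq> {}"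
        using IVT'[of G c s x] 3 \<open>c \<le> x\<close> contG by auto
      moreover have bdd: "bdd_below ?S"
        by (auto intro!: bdd_belowI[of _ c])
      moreover have "closed ?S"
        by (rule continuous_closed_preimage_constant[OF contG]) auto
      ultimately have \<sigma>: "Inf ?S \<in> ?S"
        by (rule closed_contains_Inf)
      have "G t < s \<longleftrightarrow> t < Inf ?S" if "t \<in> {c..x}" for t
      proof
        assume "G t < s"
        then show "t < Inf ?S"
          using G_mono[of "Inf ?S" t] \<sigma> by (cases "t < Inf ?S") auto
      next
        assume "t < Inf ?S"
        then have "t \<notin> ?S" "G t \<le> s"
          using cInf_lower[OF _ bdd, of t] G_mono[of t "Inf ?S"] \<sigma> by auto
        then show "G t < s" using that by auto
      qed
      then have "G -` {..<s} \<inter> {c..<x} = {c..<Inf ?S}"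
        using \<sigma> by auto
      moreover have "{..<s} \<inter> {G c..<G x} = {G c..<s}"
        using 3 by auto
      ultimately show ?thesis
        using N emL \<sigma> 3 by (simp add: emeasure_mu_Ico)
    qed
  qed
qed simp_all

lemma integral_comp_G:
  fixes \<Phi> \<Psi> :: "real \<Rightarrow> real"
  assumes cont: "continuous_on {c..x} g" and cx: "a \<le> c" "c \<le> x" "x \<le> b"
    and \<Phi>: "continuous_on UNIV \<Phi>"
    and \<Psi>: "\<And>s. s \<in> {G c..G x} \<Longrightarrow> (\<Psi> has_real_derivative \<Phi> s) (at s within {G c..G x})"
  shows "(\<integral>t. indicator {c..<x} t * \<Phi> (G t) \<partial>\<mu>) = \<Psi> (G x) - \<Psi> (G c)"
proof -
  have [measurable]: "\<Phi> \<in> borel_measurable borel"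
    using \<Phi> by (rule borel_measurable_continuous_onI)
  have Gcx: "G c \<le> G x" using G_mono cx by simp
  have "(\<integral>t. indicator {c..<x} t * \<Phi> (G t) \<partial>\<mu>) =
      (\<integral>t. \<Phi> (G t) \<partial>density \<mu> (\<lambda>t. ennreal (indicator {c..<x} t)))"
    by (subst integral_density) auto
  also have "\<dots> = (\<integral>s. \<Phi> s \<partial>distr (density \<mu> (indicator {c..<x})) borel G)"
    by (subst integral_distr) (auto simp: ennreal_indicator)
  also have "\<dots> = (\<integral>s. \<Phi> s \<partial>density lborel (\<lambda>s. ennreal (indicator {G c..<G x} s)))"
    by (simp add: distr_G_eq_lborel[OF cont cx] ennreal_indicator)
  also have "\<dots> = (\<integral>s. indicator {G c..<G x} s * \<Phi> s \<partial>lborel)"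
    by (subst integral_density) auto
  also have "\<dots> = (LBINT s=G c..G x. \<Phi> s)"
    using Gcx by (simp add: interval_integral_Ico set_lebesgue_integral_def)
  also have "\<dots> = \<Psi> (G x) - \<Psi> (G c)"
    using Gcx \<Psi>
    by (intro interval_integral_FTC_finite continuous_on_subset[OF \<Phi>])
      (auto simp: has_real_derivative_iff_has_vector_derivative min_def max_def)
  finally show ?thesis .
qed

lemma g_integral_eq_antiderivative:
  fixes H Q K :: "real \<Rightarrow> real"
  assumes cont: "continuous_on {c..b} g" and cx: "a \<le> c" "c \<le> x" "x \<le> b"
    and H: "H \<in> borel_measurable borel" "\<And>t. \<bar>H t\<bar> \<le> B" "\<And>t. t \<in> {c..b} \<Longrightarrow> H t = Q (g t)"
    and Q: "continuous_on UNIV Q"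
    and K: "\<And>s. s \<in> {g c..g b} \<Longrightarrow> (K has_real_derivative Q s) (at s within {g c..g b})"
  shows "g_integral H x - g_integral H c = K (g x) - K (g c)"
proof -
  have "g_integral H x - g_integral H c = (\<integral>t. indicator {c..<x} t * H t \<partial>\<mu>)"
    using cx by (intro g_integral_diff[OF H(1,2)])
  also have "\<dots> = (\<integral>t. indicator {c..<x} t * Q (G t) \<partial>\<mu>)"
    using cx by (intro Bochner_Integration.integral_cong refl) (auto simp: H(3) G_eq split: split_indicator)
  also have "\<dots> = K (G x) - K (G c)"
  proof (rule integral_comp_G)
    show "continuous_on {c..x} g" using cont by (rule continuous_on_subset) (use cx in auto)
    have "{G c..G x} \<subseteq> {g c..g b}"
      using cx g_mono_le[of x b] by (auto simp: G_eq)
    then show "(K has_real_derivative Q s) (at s within {G c..G x})" if "s \<in> {G c..G x}" for s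
      using K[of s] that by (blast intro: DERIV_subset)
  qed (use Q cx in auto)
  finally show ?thesis
    using cx by (simp add: G_eq)
qed

lemma gm_eq_power:
  assumes cont: "continuous_on {a..b} g" and x: "x \<in> {a..b}"
  shows "gm n x = (g x - g a) ^ n"
  using x
proof (induction n arbitrary: x)
  case 0 then show ?case by simp
next
  case (Suc n)
  have "g_integral (gm n) x = (\<integral>t. indicator {a..<x} t * (G t - g a) ^ n \<partial>\<mu>)"
    using Suc by (auto simp: g_integral_def indicator_def G_eq intro!: Bochner_Integration.integral_cong)
  also have "\<dots> = (G x - g a) ^ Suc n / real (Suc n) - (G a - g a) ^ Suc n / real (Suc n)"
  proof (rule integral_comp_G)
    show "continuous_on {a..x} g"
      using cont by (rule continuous_on_subset) (use Suc.prems in auto)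
    show "((\<lambda>s. (s - g a) ^ Suc n / real (Suc n)) has_real_derivative (s - g a) ^ n)
        (at s within {G a..G x})" for s
      by (auto intro!: derivative_eq_intros simp del: of_nat_Suc) (cases n; simp add: field_simps)
  qed (use Suc.prems in \<open>auto intro!: continuous_intros\<close>)
  finally show ?case
    using Suc.prems by (simp add: gm_Suc G_eq G_left del: of_nat_Suc)
qed

section \<open>Approximation by \<open>g\<close>-polynomials\<close>

definition approximable :: "(real \<Rightarrow> real) \<Rightarrow> bool" where
  "approximable f \<longleftrightarrow> (\<forall>\<epsilon>>0. \<exists>q N. \<forall>x\<in>{a..b}. \<bar>f x - (\<Sum>n<N. q n * gm n x)\<bar> < \<epsilon>)"

lemma approximableI_close:
  assumes "\<And>\<epsilon>. \<epsilon> > 0 \<Longrightarrow> \<exists>\<phi>. approximable \<phi> \<and> (\<forall>x\<in>{a..b}. \<bar>f x - \<phi> x\<bar> < \<epsilon>)"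
  shows "approximable f"
  unfolding approximable_def
proof (intro allI impI)
  fix \<epsilon> :: real assume "\<epsilon> > 0"
  then obtain \<phi> q N where "\<forall>x\<in>{a..b}. \<bar>f x - \<phi> x\<bar> < \<epsilon>/2"
    "\<forall>x\<in>{a..b}. \<bar>\<phi> x - (\<Sum>n<N. q n * gm n x)\<bar> < \<epsilon>/2"
    using assms[of "\<epsilon>/2"] unfolding approximable_def by (meson half_gt_zero)
  then have "\<forall>x\<in>{a..b}. \<bar>f x - (\<Sum>n<N. q n * gm n x)\<bar> < \<epsilon>"
    by (smt (verit, best) field_sum_of_halves)
  then show "\<exists>q N. \<forall>x\<in>{a..b}. \<bar>f x - (\<Sum>n<N. q n * gm n x)\<bar> < \<epsilon>"
    by blast
qed

lemma approximable_if_continuous: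
  assumes cont: "continuous_on {a..b} g" and f: "uniformly_continuous_wrt g {a..b} f"
  shows "approximable f"
  unfolding approximable_def
proof (intro allI impI)
  fix \<epsilon> :: real assume "\<epsilon> > 0"
  obtain F where F: "continuous_on {g a..g b} F" "\<And>x. x \<in> {a..b} \<Longrightarrow> f x = F (g x)"
    using uniformly_continuous_wrt_factor[OF cont a_le_b f] by blast
  obtain P where P: "real_polynomial_function P" "\<And>s. s \<in> {g a..g b} \<Longrightarrow> \<bar>F s - P s\<bar> < \<epsilon>"
    using Stone_Weierstrass_real_polynomial_function[OF compact_Icc F(1) \<open>\<epsilon> > 0\<close>] by blast
  have "real_polynomial_function (\<lambda>s. P (s + g a))"
    using real_polynomial_function_compose[of "\<lambda>s. s + g a" P] P(1)
    by (simp add: o_def polynomial_function_add)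
  then obtain q N where q: "\<And>s. P (s + g a) = (\<Sum>i\<le>N. q i * s ^ i)"
    unfolding real_polynomial_function_iff_sum by metis
  have "\<bar>f x - (\<Sum>n<Suc N. q n * gm n x)\<bar> < \<epsilon>" if x: "x \<in> {a..b}" for x
  proof -
    have "(\<Sum>n<Suc N. q n * gm n x) = P (g x)"
      using q[of "g x - g a"] gm_eq_power[OF cont x] by (simp add: lessThan_Suc_atMost)
    moreover have "g x \<in> {g a..g b}"
      using x g_mono_le[of a x] g_mono_le[of x b] a_le_b by auto
    ultimately show ?thesis using P(2) F(2)[OF x] by simp
  qed
  then show "\<exists>q N. \<forall>x\<in>{a..b}. \<bar>f x - (\<Sum>n<N. q n * gm n x)\<bar> < \<epsilon>"
    by blast
qed

lemma approximable_imp_close_g_integral: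
  assumes "approximable f" "\<epsilon> > 0"
  obtains c H B L where "H \<in> borel_measurable borel" "\<And>t. \<bar>H t\<bar> \<le> B"
    "\<And>x y. x \<in> {a..b} \<Longrightarrow> y \<in> {a..b} \<Longrightarrow> \<bar>H x - H y\<bar> \<le> L * \<bar>g x - g y\<bar>"
    "\<And>x. x \<in> {a..b} \<Longrightarrow> \<bar>f x - (c + g_integral H x)\<bar> < \<epsilon>"
proof -
  obtain q N where qN: "\<And>x. x \<in> {a..b} \<Longrightarrow> \<bar>f x - (\<Sum>n<N. q n * gm n x)\<bar> < \<epsilon>"
    using assms unfolding approximable_def by blast
  define q' where "q' n = (if n < N then q n else 0)" for n
  define H where "H = (\<lambda>t. \<Sum>n<N. q' (Suc n) * real (Suc n) * gm n t)"
  have "(\<Sum>n<N. q n * gm n x) = (\<Sum>n<Suc N. q' n * gm n x)" for x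
    by (simp add: q'_def)
  then have close: "\<bar>f x - (q' 0 + g_integral H x)\<bar> < \<epsilon>" if "x \<in> {a..b}" for x
    using qN[OF that] sum_gm_eq_g_integral[of x q' N] that by (simp add: H_def)
  obtain B where "\<And>t. \<bar>H t\<bar> \<le> B"
    unfolding H_def using sum_gm_bounded[where q = "\<lambda>n. q' (Suc n) * real (Suc n)"] by auto
  moreover obtain C where C: "\<And>x y. x \<le> y \<Longrightarrow> \<bar>H y - H x\<bar> \<le> C * (G y - G x)"
    unfolding H_def using sum_gm_lipschitz[where q = "\<lambda>n. q' (Suc n) * real (Suc n)" and N = N] by blast
  have "\<bar>H x - H y\<bar> \<le> \<bar>C\<bar> * \<bar>g x - g y\<bar>" if "x \<in> {a..b}" "y \<in> {a..b}" for x y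
  proof -
    have ordered: "\<bar>H v - H u\<bar> \<le> \<bar>C\<bar> * \<bar>g v - g u\<bar>" if "u \<in> {a..b}" "v \<in> {a..b}" "u \<le> v" for u v
      using C[OF that(3)] G_mono[OF that(3)] that g_mono_le[OF that] abs_ge_self[of C]
      by (simp add: G_eq) (smt (verit) mult_right_mono)
    then show ?thesis
      using that ordered[of x y] ordered[of y x] by (cases "x \<le> y") (simp_all add: abs_minus_commute)
  qed
  moreover have "H \<in> borel_measurable borel"
    unfolding H_def by measurable
  ultimately show ?thesis using that close by blast
qed

end

section \<open>Removing a jump\<close>

locale derivator_jump = derivator_interval +
  fixes d :: real
  assumes d: "a \<le> d" "d < b"
begin

definition J where "J = measure \<mu> {d}"

definition gt where "gt = (\<lambda>x. g x - (if d < x then J else 0))"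

lemma J_nonneg: "0 \<le> J"
  by (simp add: J_def)

lemma J_le: assumes "x \<le> d" "d < y" shows "J \<le> G y - G x"
  using mu.finite_measure_mono[of "{d}" "{x..<y}"] assms by (simp add: J_def measure_mu_Ico)

lemma G_jump: assumes "d < y" shows "G y - G d = J + measure \<mu> {d<..<y}"
proof -
  have "{d..<y} = {d} \<union> {d<..<y}" using assms by auto
  then have "measure \<mu> {d..<y} = J + measure \<mu> {d<..<y}"
    using mu.finite_measure_Union[of "{d}" "{d<..<y}"] by (simp add: J_def)
  then show ?thesis
    using measure_mu_Ico[of d y] assms by simp
qed

lemma measure_right_of_d_small:
  assumes "\<epsilon> > 0" shows "\<exists>\<delta>>0. \<forall>y. d < y \<and> y < d + \<delta> \<longrightarrow> measure \<mu> {d<..<y} < \<epsilon>"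
proof -
  let ?A = "\<lambda>n::nat. {d<..<d + 1 / Suc n}"
  have "decseq ?A"
  proof (rule decseq_def[THEN iffD2], intro allI impI subsetI)
    fix m n :: nat and y assume "m \<le> n" "y \<in> ?A n"
    moreover have "1 / real (Suc n) \<le> 1 / real (Suc m)"
      using \<open>m \<le> n\<close> by (intro divide_left_mono) auto
    ultimately show "y \<in> ?A m" by auto
  qed
  moreover have "\<Inter> (range ?A) = {}"
  proof safe
    fix y assume "y \<in> \<Inter> (range ?A)"
    then have y: "d < y" "\<And>n. y < d + 1 / Suc n" by auto
    obtain n where "1 / Suc n < y - d" using y(1) by (metis diff_gt_0_iff_gt nat_approx_posE)
    then show "y \<in> {}" using y(2)[of n] by simp
  qed
  ultimately have "(\<lambda>n. measure \<mu> (?A n)) \<longlonglongrightarrow> 0"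
    using mu.finite_Lim_measure_decseq[of ?A] by (simp add: image_subset_iff)
  from order_tendstoD(2)[OF this assms] obtain n where n: "measure \<mu> (?A n) < \<epsilon>"
    by (auto simp: eventually_sequentially)
  have "measure \<mu> {d<..<y} < \<epsilon>" if "d < y" "y < d + 1 / Suc n" for y
  proof -
    have "{d<..<y} \<subseteq> ?A n" using that by auto
    then show ?thesis using mu.finite_measure_mono[of "{d<..<y}" "?A n"] n by simp
  qed
  then show ?thesis by (intro exI[of _ "1 / Suc n"]) auto
qed

lemma continuous_gt_at_d: "continuous (at d within {a..b}) gt"
  unfolding continuous_within_eps_delta
proof (intro allI impI)
  fix \<epsilon> :: real assume "\<epsilon> > 0"
  have "continuous (at d within {a..d}) g"
    using derivator d by (auto simp: derivator_def)
  then obtain \<delta>1 where \<delta>1: "\<delta>1 > 0" "\<forall>y\<in>{a..d}. dist y d < \<delta>1 \<longrightarrow> dist (g y) (g d) < \<epsilon>"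
    using \<open>\<epsilon> > 0\<close> unfolding continuous_within_eps_delta by blast
  obtain \<delta>2 where \<delta>2: "\<delta>2 > 0" "\<forall>y. d < y \<and> y < d + \<delta>2 \<longrightarrow> measure \<mu> {d<..<y} < \<epsilon>"
    using measure_right_of_d_small[OF \<open>\<epsilon> > 0\<close>] by blast
  have "dist (gt y) (gt d) < \<epsilon>" if "y \<in> {a..b}" "dist y d < min \<delta>1 \<delta>2" for y
  proof (cases "d < y")
    case True
    have "gt y - gt d = measure \<mu> {d<..<y}"
      using G_jump[OF True] True that d by (simp add: gt_def G_eq)
    moreover have "measure \<mu> {d<..<y} < \<epsilon>"
      using \<delta>2(2) True that by (auto simp: dist_real_def)
    ultimately show ?thesis by (simp add: dist_real_def)
  next
    case False
    then show ?thesis using \<delta>1(2) that by (auto simp: gt_def dist_real_def)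
  qed
  then show "\<exists>\<delta>>0. \<forall>y\<in>{a..b}. dist y d < \<delta> \<longrightarrow> dist (gt y) (gt d) < \<epsilon>"
    using \<delta>1(1) \<delta>2(1) by (intro exI[of _ "min \<delta>1 \<delta>2"]) auto
qed

lemma eventually_gt_eq:
  shows "x < d \<Longrightarrow> \<forall>\<^sub>F y in at x within S. gt y = g y"
    and "d < x \<Longrightarrow> \<forall>\<^sub>F y in at x within S. gt y = g y - J"
proof -
  show "\<forall>\<^sub>F y in at x within S. gt y = g y" if "x < d"
    using order_tendstoD(2)[OF tendsto_ident_at that] by (rule eventually_mono) (simp add: gt_def)
  show "\<forall>\<^sub>F y in at x within S. gt y = g y - J" if "d < x"
    using order_tendstoD(1)[OF tendsto_ident_at that] by (rule eventually_mono) (simp add: gt_def)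
qed

lemma derivator_gt: "derivator a b gt"
  unfolding derivator_def
proof safe
  show "mono_on {a..b} gt"
  proof (rule mono_onI)
    fix x y assume xy: "x \<in> {a..b}" "y \<in> {a..b}" "x \<le> y"
    have "J \<le> g y - g x" if "x \<le> d" "d < y" using J_le[OF that] xy by (simp add: G_eq)
    then show "gt x \<le> gt y" unfolding gt_def using xy g_mono_le[OF xy] by auto
  qed
  fix x assume x: "x \<in> {a..b}"
  have "continuous (at x within {a..x}) g" using derivator x by (auto simp: derivator_def)
  then show "continuous (at x within {a..x}) gt"
  proof (cases "d < x")
    case True
    then show ?thesis
      using continuous_at_within_cong[OF _ eventually_gt_eq(2)[OF True]]
        continuous_diff[OF \<open>continuous (at x within {a..x}) g\<close> continuous_const]
      by (simp add: gt_def)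
  next
    case False
    have "\<forall>\<^sub>F y in at x within {a..x}. gt y = g y"
      using False by (auto simp: gt_def eventually_at_filter)
    then show ?thesis
      using continuous_at_within_cong[of gt x g] False \<open>continuous (at x within {a..x}) g\<close>
      by (simp add: gt_def)
  qed
qed

lemma mono_on_gt: "mono_on {a..b} gt"
  using derivator_gt by (simp add: derivator_def)

sublocale T: derivator_interval a b gt
  by unfold_locales (rule derivator_gt, rule a_le_b)

lemma continuous_gt_iff:
  assumes "x \<noteq> d"
  shows "continuous (at x within {a..b}) gt \<longleftrightarrow> continuous (at x within {a..b}) g"
proof (cases "d < x")
  case True
  have "continuous (at x within {a..b}) gt \<longleftrightarrow> continuous (at x within {a..b}) (\<lambda>y. g y - J)"
    using True by (intro continuous_at_within_cong eventually_gt_eq) (simp add: gt_def)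
  also have "\<dots> \<longleftrightarrow> continuous (at x within {a..b}) g"
    using continuous_diff[of _ "\<lambda>y. g y - J" "\<lambda>_. - J"] continuous_diff[of _ g "\<lambda>_. J"]
    by (auto intro: continuous_const)
  finally show ?thesis .
next
  case False
  then have "x < d" using assms by simp
  then show ?thesis
    by (intro continuous_at_within_cong eventually_gt_eq) (simp add: gt_def)
qed

lemma discontinuities_gt:
  "{x \<in> {a..b}. \<not> continuous (at x within {a..b}) gt} =
    {x \<in> {a..b}. \<not> continuous (at x within {a..b}) g} - {d}"
proof -
  have "continuous (at x within {a..b}) gt \<longleftrightarrow> continuous (at x within {a..b}) g \<or> x = d" for x
    using continuous_gt_iff[of x] continuous_gt_at_d by (cases "x = d") auto
  then show ?thesis by blast
qed

lemma J_pos: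
  assumes "\<not> continuous (at d within {a..b}) g" shows "0 < J"
proof (rule ccontr)
  assume "\<not> 0 < J"
  then have "gt = g" using J_nonneg by (simp add: gt_def fun_eq_iff)
  then show False using continuous_gt_at_d assms by simp
qed

lemma T_G_eq: "T.G x = G x - (if d < x then J else 0)"
proof -
  have "d < max a (min b x) \<longleftrightarrow> d < x" using d by linarith
  then show ?thesis by (simp add: g_ext_def gt_def)
qed

lemma T_mu_eq: "T.\<mu> = density \<mu> (\<lambda>t. ennreal (indicator (- {d}) t))"
proof (rule measure_eqI_Iio)
  show "emeasure T.\<mu> {..<x} < \<infinity>" for x
    by (simp add: less_top[symmetric])
  show "emeasure T.\<mu> {..<x} = emeasure (density \<mu> (\<lambda>t. ennreal (indicator (- {d}) t))) {..<x}" for x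
  proof -
    have "emeasure (density \<mu> (\<lambda>t. ennreal (indicator (- {d}) t))) {..<x} = emeasure \<mu> ({..<x} - {d})"
      by (simp add: ennreal_indicator emeasure_restricted Diff_eq Int_commute)
    also have "\<dots> = ennreal (T.G x - g a)"
    proof (cases "d < x")
      case True
      then have "emeasure \<mu> ({..<x} - {d}) = emeasure \<mu> {..<x} - emeasure \<mu> {d}"
        by (intro emeasure_Diff) auto
      also have "\<dots> = ennreal (G x - g a - J)"
        using J_nonneg by (simp add: emeasure_mu_lessThan mu.emeasure_eq_measure[of "{d}"] J_def ennreal_minus)
      finally show ?thesis using True by (simp add: T_G_eq algebra_simps)
    next
      case False
      then have "{..<x} - {d} = {..<x}" by auto
      then show ?thesis using False by (simp add: T_G_eq emeasure_mu_lessThan)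
    qed
    moreover have "gt a = g a" using d by (simp add: gt_def)
    ultimately show ?thesis by (simp add: T.emeasure_mu_lessThan)
  qed
qed simp_all

lemma integral_mu_split:
  fixes h :: "real \<Rightarrow> real"
  assumes h: "h \<in> borel_measurable borel" "\<And>t. \<bar>h t\<bar> \<le> B" and A: "A \<in> sets borel"
  shows "(\<integral>t. indicator A t * h t \<partial>\<mu>) =
    (\<integral>t. indicator A t * h t \<partial>T.\<mu>) + (if d \<in> A then J * h d else 0)"
proof -
  have "(\<integral>t. indicator A t * h t \<partial>\<mu>) =
      (\<integral>t. indicator (A - {d}) t * h t \<partial>\<mu>) + (\<integral>t. indicator (A \<inter> {d}) t * h t \<partial>\<mu>)"
    using A by (subst Bochner_Integration.integral_add[symmetric])
      (auto intro!: integrable_mu[OF h(1) _ h(2)] Bochner_Integration.integral_cong split: split_indicator)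
  moreover have "(\<integral>t. indicator (A \<inter> {d}) t * h t \<partial>\<mu>) = (if d \<in> A then J * h d else 0)"
  proof -
    have "(\<integral>t. indicator (A \<inter> {d}) t * h t \<partial>\<mu>) = (\<integral>t. indicator (A \<inter> {d}) t * h d \<partial>\<mu>)"
      by (intro Bochner_Integration.integral_cong) (auto split: split_indicator)
    then show ?thesis by (cases "d \<in> A") (auto simp: J_def Int_absorb1)
  qed
  moreover have "(\<integral>t. indicator (A - {d}) t * h t \<partial>\<mu>) = (\<integral>t. indicator A t * h t \<partial>T.\<mu>)"
    unfolding T_mu_eq using A h(1)
    by (subst integral_density) (auto intro!: Bochner_Integration.integral_cong split: split_indicator)
  ultimately show ?thesis by simp
qed

lemma T_mu_singleton: "emeasure T.\<mu> {d} = 0"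
  by (simp add: T_mu_eq ennreal_indicator emeasure_restricted)

lemma gm_eq_T_gm:
  assumes "x \<in> {a..b}"
  shows "gm n x = T.gm n x + (if d < x then real n * J * T.gm (n - 1) x else 0)"
  using assms
proof (induction n arbitrary: x)
  case 0 then show ?case by simp
next
  case (Suc n)
  have x: "a \<le> x" "x \<le> b" using Suc.prems by auto
  define corr where "corr t = indicator {d<..} t * (real n * J * T.gm (n - 1) t)" for t
  have corr_measurable [measurable]: "corr \<in> borel_measurable borel"
    unfolding corr_def by measurable
  have corr_bounded: "\<exists>B. \<forall>t. \<bar>corr t\<bar> \<le> B"
  proof -
    obtain B where B: "\<And>t. \<bar>T.gm (n - 1) t\<bar> \<le> B" using T.gm_bounded by blast
    have "\<bar>corr t\<bar> \<le> real n * J * B" for t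
      using B[of t] J_nonneg by (auto simp: corr_def abs_mult intro!: mult_left_mono split: split_indicator)
    then show ?thesis by blast
  qed
  obtain B1 where B1: "\<And>t. \<bar>gm n t\<bar> \<le> B1" using gm_bounded by blast
  have "g_integral (gm n) x =
      (\<integral>t. indicator {a..<x} t * gm n t \<partial>T.\<mu>) + (if d < x then J * gm n d else 0)"
    unfolding g_integral_def using integral_mu_split[OF gm_measurable B1, of "{a..<x}"] d by simp
  also have "(\<integral>t. indicator {a..<x} t * gm n t \<partial>T.\<mu>) = T.g_integral (\<lambda>t. T.gm n t + corr t) x"
    unfolding T.g_integral_def using x
    by (intro Bochner_Integration.integral_cong) (auto simp: indicator_def Suc.IH corr_def)
  also have "\<dots> = T.g_integral (T.gm n) x + T.g_integral corr x"
    using T.g_integral_sum[of "\<lambda>i. if i = 0 then T.gm n else corr" "\<lambda>_. 1" 2 x] T.gm_bounded corr_bounded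
    by (simp add: numeral_2_eq_2)
  also have "T.g_integral corr x = (if d < x then J * (T.gm n x - T.gm n d) else 0)"
  proof (cases "d < x \<and> n \<noteq> 0")
    case True
    have "T.g_integral corr x = real n * J * (\<integral>t. indicator {d..<x} t * T.gm (n - 1) t \<partial>T.\<mu>)"
    proof -
      have "AE t in T.\<mu>. t \<noteq> d"
        using T_mu_singleton by (intro AE_I'[of "{d}"]) (auto simp: null_sets_def)
      then have "AE t in T.\<mu>. indicator {a..<x} t * corr t = real n * J * (indicator {d..<x} t * T.gm (n - 1) t)"
        by eventually_elim (use d in \<open>auto simp: corr_def split: split_indicator\<close>)
      then have "(\<integral>t. indicator {a..<x} t * corr t \<partial>T.\<mu>) =
          (\<integral>t. real n * J * (indicator {d..<x} t * T.gm (n - 1) t) \<partial>T.\<mu>)"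
        by (intro integral_cong_AE) auto
      then show ?thesis unfolding T.g_integral_def by simp
    qed
    also have "\<dots> = real n * J * (T.g_integral (T.gm (n - 1)) x - T.g_integral (T.gm (n - 1)) d)"
    proof -
      obtain B where B: "\<And>t. \<bar>T.gm (n - 1) t\<bar> \<le> B" using T.gm_bounded by blast
      show ?thesis using T.g_integral_diff[OF T.gm_measurable B, of d x] True d by simp
    qed
    also have "\<dots> = J * (T.gm n x - T.gm n d)"
      using True x d by (cases n) (auto simp: T.gm_Suc algebra_simps)
    finally show ?thesis using True by simp
  next
    case False
    then have "T.g_integral corr x = (\<integral>t. 0 \<partial>T.\<mu>)"
      unfolding T.g_integral_def
      by (intro Bochner_Integration.integral_cong) (auto simp: corr_def split: split_indicator)
    then show ?thesis using False by auto
  qed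
  also have "gm n d = T.gm n d"
    using Suc.IH[of d] d by simp
  finally show ?case
    using x by (simp add: gm_Suc T.gm_Suc algebra_simps)
qed

lemma sum_gm_Suc_eq_T:
  assumes "x \<in> {a..b}"
  shows "(\<Sum>n<N. q n / real (Suc n) * gm (Suc n) x) =
    T.g_integral (\<lambda>t. \<Sum>n<N. q n * T.gm n t) x + (if d < x then J * (\<Sum>n<N. q n * T.gm n x) else 0)"
proof -
  have "q n / real (Suc n) * gm (Suc n) x =
      q n * T.g_integral (T.gm n) x + (if d < x then J * (q n * T.gm n x) else 0)" for n
    using gm_eq_T_gm[OF assms, of "Suc n"] assms by (simp add: T.gm_Suc field_simps del: of_nat_Suc)
  then show ?thesis
    by (simp add: T.g_integral_sum T.gm_bounded sum.distrib sum_distrib_left)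
qed

lemma approximable_transfer:
  fixes H :: "real \<Rightarrow> real"
  assumes H: "H \<in> borel_measurable borel" "\<And>t. \<bar>H t\<bar> \<le> B" "T.approximable H"
  shows "approximable (\<lambda>x. c + T.g_integral H x + (if d < x then J * H x else 0))"
  unfolding approximable_def
proof (intro allI impI)
  note [measurable] = H(1)
  fix \<epsilon> :: real assume "\<epsilon> > 0"
  define L where "L = gt b - gt a"
  have "0 \<le> L" unfolding L_def using T.g_mono_le[of a b] a_le_b by auto
  define \<eta> where "\<eta> = \<epsilon> / (L + J + 1)"
  have "\<eta> > 0" "\<eta> * (L + J + 1) = \<epsilon>"
    using \<open>\<epsilon> > 0\<close> \<open>0 \<le> L\<close> J_nonneg by (simp_all add: \<eta>_def)
  then have \<eta>: "\<eta> > 0" "\<eta> * L + J * \<eta> < \<epsilon>"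
    by (simp_all add: algebra_simps)
  obtain q N where qN: "\<And>x. x \<in> {a..b} \<Longrightarrow> \<bar>H x - (\<Sum>n<N. q n * T.gm n x)\<bar> < \<eta>"
    using H(3) \<eta>(1) unfolding T.approximable_def by blast
  define P where "P = (\<lambda>t. \<Sum>n<N. q n * T.gm n t)"
  have P_measurable [measurable]: "P \<in> borel_measurable borel"
    unfolding P_def by measurable
  obtain BP where BP: "\<And>t. \<bar>P t\<bar> \<le> BP"
    unfolding P_def using T.sum_gm_bounded by blast
  define q' where "q' n = (if n = 0 then c else q (n - 1) / real n)" for n
  have "\<bar>c + T.g_integral H x + (if d < x then J * H x else 0) - (\<Sum>n<Suc N. q' n * gm n x)\<bar> < \<epsilon>"
    if x: "x \<in> {a..b}" for x
  proof -
    have "(\<Sum>n<Suc N. q' n * gm n x) = c + T.g_integral P x + (if d < x then J * P x else 0)"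
      using sum_gm_Suc_eq_T[OF x, of q N] unfolding sum.lessThan_Suc_shift by (simp add: q'_def P_def)
    moreover have "\<bar>T.g_integral H x - T.g_integral P x\<bar> \<le> \<eta> * L"
    proof -
      have "integrable T.\<mu> (\<lambda>t. indicator {a..<x} t * H t)" "integrable T.\<mu> (\<lambda>t. indicator {a..<x} t * P t)"
        using H(1,2) BP by (auto intro!: T.integrable_mu)
      then have "T.g_integral H x - T.g_integral P x = (\<integral>t. indicator {a..<x} t * (H t - P t) \<partial>T.\<mu>)"
        unfolding T.g_integral_def by (simp add: right_diff_distrib)
      also have "\<bar>\<dots>\<bar> \<le> \<eta> * measure T.\<mu> {a..<x}"
        using qN x by (intro T.abs_integral_mu_le) (auto simp: P_def less_imp_le)
      also have "measure T.\<mu> {a..<x} \<le> L"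
        using x T.measure_mu_Ico[of a x] T.G_mono[of x b] by (simp add: L_def T.G_eq)
      finally show ?thesis using \<eta>(1) by (simp add: mult_left_mono order_trans)
    qed
    moreover have "\<bar>(if d < x then J * H x else 0) - (if d < x then J * P x else 0)\<bar> \<le> J * \<eta>"
      using qN[OF x] J_nonneg \<eta>(1) by (auto simp: P_def abs_mult right_diff_distrib[symmetric] mult_left_mono)
    ultimately show ?thesis using \<eta>(2) by linarith
  qed
  then show "\<exists>q N. \<forall>x\<in>{a..b}. \<bar>c + T.g_integral H x + (if d < x then J * H x else 0) - (\<Sum>n<N. q n * gm n x)\<bar> < \<epsilon>"
    by blast
qed

lemma T_g_integral_ramp_bounds:
  assumes "k > 0" "a \<le> x" "x \<le> d"
  shows "0 \<le> T.g_integral (\<lambda>t. ramp (gt d - k) k (T.G t)) x"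
    "T.g_integral (\<lambda>t. ramp (gt d - k) k (T.G t)) x \<le> k"
proof -
  show "0 \<le> T.g_integral (\<lambda>t. ramp (gt d - k) k (T.G t)) x"
    unfolding T.g_integral_def by (intro integral_nonneg_AE) (auto simp: ramp_bounds)
  \<comment> \<open>the ramp vanishes outside the superlevel set \<open>{gt d - k < T.G}\<close>\<close>
  define U where "U = {t \<in> {a..<d}. gt d - k < T.G t}"
  have U: "U \<in> sets borel" unfolding U_def by measurable
  have "T.g_integral (\<lambda>t. ramp (gt d - k) k (T.G t)) x \<le> (\<integral>t. indicator U t \<partial>T.\<mu>)"
    unfolding T.g_integral_def
  proof (rule integral_mono)
    show "integrable T.\<mu> (\<lambda>t. indicator {a..<x} t * ramp (gt d - k) k (T.G t))"
      by (rule T.integrable_mu[where B=1]) (auto simp: abs_le_iff ramp_bounds)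
    show "integrable T.\<mu> (\<lambda>t. indicator U t :: real)"
      using U by (intro integrable_real_indicator) (auto simp: less_top[symmetric])
    show "indicator {a..<x} t * ramp (gt d - k) k (T.G t) \<le> indicator U t" for t
      using assms ramp_eq_0[of k "T.G t" "gt d - k"] ramp_bounds[of "gt d - k" k "T.G t"]
      by (auto simp: U_def split: split_indicator)
  qed
  also have "\<dots> = measure T.\<mu> U"
    using U by simp
  also have "\<dots> \<le> max 0 (T.G d - (gt d - k))"
    unfolding U_def by (rule T.measure_superlevel_le) (use d in simp)
  also have "\<dots> = k"
    using assms d by (simp add: T.G_eq)
  finally show "T.g_integral (\<lambda>t. ramp (gt d - k) k (T.G t)) x \<le> k" .
qed

lemma continuous_on_gt:
  assumes "\<And>x. x \<in> {d<..b} \<Longrightarrow> continuous (at x within {a..b}) g"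
  shows "continuous_on {d..b} gt"
  unfolding continuous_on_eq_continuous_within
proof
  fix x assume x: "x \<in> {d..b}"
  have "continuous (at x within {a..b}) gt"
    using continuous_gt_at_d continuous_gt_iff[of x] assms[of x] x by (cases "x = d") auto
  then show "continuous (at x within {d..b}) gt"
    by (rule continuous_within_subset) (use d in auto)
qed

text \<open>Frozen on \<open>[d, d']\<close>, \<open>f\<close> factors through \<open>gt\<close>, which is continuous on \<open>[d, b]\<close>.\<close>

lemma close_continuous_comp_gt:
  fixes f :: "real \<Rightarrow> real"
  assumes gt: "continuous_on {d..b} gt" and f: "uniformly_continuous_wrt g {a..b} f" and "\<epsilon> > 0"
  obtains F where "continuous_on UNIV F" "\<And>x. x \<in> {a..b} \<Longrightarrow> d < x \<Longrightarrow> \<bar>f x - F (gt x)\<bar> < \<epsilon>"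
proof -
  have g_eq: "g x = gt x + J" if "d < x" for x
    using that by (simp add: gt_def)
  obtain \<delta> where \<delta>: "\<delta> > 0" "\<And>x y. x \<in> {a..b} \<Longrightarrow> y \<in> {a..b} \<Longrightarrow> \<bar>g x - g y\<bar> < \<delta> \<Longrightarrow> \<bar>f x - f y\<bar> < \<epsilon>"
    using uniformly_continuous_wrtD[OF f \<open>\<epsilon> > 0\<close>] by auto
  obtain \<delta>0 where \<delta>0: "\<delta>0 > 0" "\<forall>y\<in>{a..b}. dist y d < \<delta>0 \<longrightarrow> dist (gt y) (gt d) < \<delta>"
    using continuous_gt_at_d \<delta>(1) unfolding continuous_within_eps_delta by blast
  define d' where "d' = min b (d + \<delta>0/2)"
  have d': "d < d'" "d' \<le> b" "d' - d < \<delta>0"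
    using d \<delta>0(1) by (auto simp: d'_def)
  define f' where "f' x = f (max d' (min b x))" for x
  have "uniformly_continuous_wrt gt {d..b} f'"
    unfolding f'_def using d d' g_eq
    by (intro uniformly_continuous_wrt_clamp[OF f mono_on_subset[OF mono_on_gt]]) auto
  then obtain F' where F': "continuous_on {gt d..gt b} F'" "\<And>x. x \<in> {d..b} \<Longrightarrow> f' x = F' (gt x)"
    using uniformly_continuous_wrt_factor[OF gt] d by (metis less_imp_le)
  define F where "F s = F' (max (gt d) (min (gt b) s))" for s
  have gt_le: "gt d \<le> gt b"
    using mono_onD[OF mono_on_gt] d by auto
  have "continuous_on UNIV F"
    unfolding F_def
    by (rule continuous_on_compose2[OF F'(1)]) (use gt_le in \<open>auto intro!: continuous_intros\<close>)
  moreover have "\<bar>f x - F (gt x)\<bar> < \<epsilon>" if x: "x \<in> {a..b}" "d < x" for x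
  proof -
    have "F (gt x) = f' x"
      using F'(2)[of x] mono_onD[OF mono_on_gt, of d x] mono_onD[OF mono_on_gt, of x b] x d
      by (simp add: F_def)
    moreover have "\<bar>f x - f d'\<bar> < \<epsilon>" if "x < d'"
    proof -
      \<comment> \<open>between \<open>d\<close> and \<open>d'\<close> the function \<open>gt\<close>, hence \<open>g\<close>, varies by less than \<open>\<delta>\<close>\<close>
      have "dist (gt d') (gt d) < \<delta>"
        using \<delta>0(2) d d' by (simp add: dist_real_def abs_of_pos)
      moreover have "gt d \<le> gt x" "gt x \<le> gt d'"
        using mono_onD[OF mono_on_gt] x that d d' by auto
      ultimately have "\<bar>g x - g d'\<bar> < \<delta>"
        using g_eq[of x] g_eq[of d'] x d' by (simp add: dist_real_def)
      then show ?thesis using \<delta>(2)[of x d'] x d d' by simp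
    qed
    ultimately show ?thesis
      using \<open>\<epsilon> > 0\<close> x by (cases "x < d'") (auto simp: f'_def max_def)
  qed
  ultimately show ?thesis using that by blast
qed

lemma uniformly_continuous_ramp_glue:
  assumes H1: "\<And>x y. x \<in> {a..b} \<Longrightarrow> y \<in> {a..b} \<Longrightarrow> \<bar>H1 x - H1 y\<bar> \<le> L * \<bar>gt x - gt y\<bar>"
    and "k > 0" and Q: "continuous_on {gt d..gt b} Q"
    and H_left: "\<And>t. t \<in> {a..d} \<Longrightarrow> H t = H1 t + \<beta> * ramp (gt d - k) k (gt t)"
    and H_right: "\<And>t. t \<in> {d..b} \<Longrightarrow> H t = Q (gt t)"
  shows "uniformly_continuous_wrt gt {a..b} H"
proof (rule uniformly_continuous_wrt_glue[OF mono_on_gt _ _ uniformly_continuous_wrt_lipschitz])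
  let ?r = "ramp (gt d - k) k"
  show "norm (H x - H y) \<le> (L + \<bar>\<beta>\<bar> / k) * \<bar>gt x - gt y\<bar>" if "x \<in> {a..d}" "y \<in> {a..d}" for x y
  proof -
    have "H x - H y = (H1 x - H1 y) + \<beta> * (?r (gt x) - ?r (gt y))"
      using H_left[OF that(1)] H_left[OF that(2)] by (simp add: algebra_simps)
    then have "\<bar>H x - H y\<bar> \<le> \<bar>H1 x - H1 y\<bar> + \<bar>\<beta>\<bar> * \<bar>?r (gt x) - ?r (gt y)\<bar>"
      by (metis abs_mult abs_triangle_ineq)
    also have "\<dots> \<le> L * \<bar>gt x - gt y\<bar> + \<bar>\<beta>\<bar> * (\<bar>gt x - gt y\<bar> / k)"
      using that d by (intro add_mono H1 mult_left_mono ramp_lipschitz \<open>k > 0\<close>) auto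
    finally show ?thesis by (simp add: algebra_simps)
  qed
  have "gt ` {d..b} \<subseteq> {gt d..gt b}"
    using d mono_onD[OF mono_on_gt] by auto
  then have "uniformly_continuous_wrt gt {d..b} (\<lambda>x. Q (gt x))"
    by (rule uniformly_continuous_wrt_comp[OF compact_uniformly_continuous[OF Q compact_Icc]])
  then show "uniformly_continuous_wrt gt {d..b} H"
    by (subst uniformly_continuous_wrt_cong[where f' = "\<lambda>x. Q (gt x)"]) (simp_all add: H_right)
qed (use d in auto)

text \<open>Correct a \<open>gt\<close>-Lipschitz \<open>H\<^sub>1\<close> by a thin ramp left of \<open>d\<close> and continue it right of \<open>d\<close> by the
  solution of \<open>K + J K' = Tf - C\<close> for a suitable constant \<open>C\<close>; the ramp's weight \<open>\<beta>\<close> is chosen so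
  that the two pieces match at \<open>d\<close>.\<close>

lemma jump_correction:
  fixes H1 Tf :: "real \<Rightarrow> real"
  assumes J: "0 < J" and gt: "continuous_on {d..b} gt"
    and H1: "H1 \<in> borel_measurable borel" "\<And>t. \<bar>H1 t\<bar> \<le> B1"
      "\<And>x y. x \<in> {a..b} \<Longrightarrow> y \<in> {a..b} \<Longrightarrow> \<bar>H1 x - H1 y\<bar> \<le> L * \<bar>gt x - gt y\<bar>"
    and Tf: "continuous_on UNIV Tf" and "\<epsilon> > 0"
  obtains H B where "H \<in> borel_measurable borel" "\<And>t. \<bar>H t\<bar> \<le> B"
    "uniformly_continuous_wrt gt {a..b} H"
    "\<And>x. x \<in> {a..b} \<Longrightarrow> x \<le> d \<Longrightarrow> \<bar>T.g_integral H x - T.g_integral H1 x\<bar> < \<epsilon>"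
    "\<And>x. x \<in> {a..b} \<Longrightarrow> d < x \<Longrightarrow> c + T.g_integral H x + J * H x = Tf (gt x)"
proof -
  note [measurable] = H1(1)
  have gt_in: "gt x \<in> {gt d..gt b}" if "x \<in> {d..b}" for x
    using that d mono_onD[OF mono_on_gt] by auto
  have TG: "T.G t = gt t" if "t \<in> {a..b}" for t
    using that by (rule T.G_eq)
  define R where "R = Tf (gt d) - c - T.g_integral H1 d - J * H1 d"
  define k where "k = \<epsilon> * J / (\<bar>R\<bar> + 1)"
  have k: "k > 0" using \<open>\<epsilon> > 0\<close> J by (simp add: k_def)
  define \<rho> where "\<rho> t = ramp (gt d - k) k (T.G t)" for t
  have \<rho>_measurable [measurable]: "\<rho> \<in> borel_measurable borel"
    unfolding \<rho>_def by measurable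
  have \<rho>: "0 \<le> T.g_integral \<rho> x" "T.g_integral \<rho> x \<le> k" if "a \<le> x" "x \<le> d" for x
    using T_g_integral_ramp_bounds[OF k that] by (simp_all add: \<rho>_def[abs_def])
  define m where "m = T.g_integral \<rho> d"
  have m: "0 \<le> m" "m \<le> k" using \<rho>[of d] d by (simp_all add: m_def)
  define \<beta> where "\<beta> = R / (J + m)"
  have \<beta>k: "\<bar>\<beta>\<bar> * k < \<epsilon>"
  proof -
    have "\<bar>\<beta>\<bar> \<le> \<bar>R\<bar> / J"
      using J m by (simp add: \<beta>_def abs_divide divide_left_mono)
    then have "\<bar>\<beta>\<bar> * k \<le> \<bar>R\<bar> / J * k"
      using k by (rule mult_right_mono[OF _ less_imp_le])
    also have "\<dots> = \<epsilon> * (\<bar>R\<bar> / (\<bar>R\<bar> + 1))"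
      using J by (simp add: k_def field_simps)
    also have "\<dots> < \<epsilon>" using \<open>\<epsilon> > 0\<close> by (simp add: field_simps)
    finally show ?thesis .
  qed
  define C where "C = c + T.g_integral H1 d + \<beta> * m"
  have "gt d \<le> gt b" using gt_in d by auto
  moreover have "continuous_on {gt d..gt b} (\<lambda>s. Tf s - C)"
    by (intro continuous_intros continuous_on_subset[OF Tf]) auto
  ultimately obtain K Q where K: "K (gt d) = 0" and Q: "continuous_on UNIV Q" "bounded (range Q)"
    and K': "\<And>s. s \<in> {gt d..gt b} \<Longrightarrow> (K has_real_derivative Q s) (at s within {gt d..gt b})"
    and ode: "\<And>s. s \<in> {gt d..gt b} \<Longrightarrow> K s + J * Q s = Tf s - C"
    using linear_ode_solution[OF _ J] by blast
  have Q_d: "Q (gt d) = H1 d + \<beta> * \<rho> d"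
  proof -
    have "J * Q (gt d) = J * (H1 d + \<beta>)"
      using ode[of "gt d"] K J m \<open>gt d \<le> gt b\<close>
      by (simp add: C_def R_def \<beta>_def field_simps)
    then show ?thesis
      using J k d by (simp add: \<rho>_def TG ramp_eq_1)
  qed
  obtain BQ where BQ: "\<And>s. \<bar>Q s\<bar> \<le> BQ"
    using Q(2) unfolding bounded_iff by auto
  have [measurable]: "Q \<in> borel_measurable borel"
    using Q(1) by (rule borel_measurable_continuous_onI)
  define H where "H t = (if t \<le> d then H1 t + \<beta> * \<rho> t else Q (T.G t))" for t
  have H_left: "H t = H1 t + \<beta> * ramp (gt d - k) k (gt t)" if "t \<in> {a..d}" for t
    using that d by (simp add: H_def \<rho>_def TG)
  have H_right: "H t = Q (gt t)" if "t \<in> {d..b}" for t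
    using that d Q_d by (cases "t = d") (auto simp: H_def TG)
  have "H \<in> borel_measurable borel"
    unfolding H_def by measurable
  moreover have "\<bar>H t\<bar> \<le> B1 + \<bar>\<beta>\<bar> + BQ" for t
  proof -
    have "0 \<le> B1" "0 \<le> BQ"
      using H1(2)[of 0] BQ[of 0] by (meson abs_ge_zero order_trans)+
    moreover have "\<bar>\<beta> * \<rho> t\<bar> \<le> \<bar>\<beta>\<bar>"
      using ramp_bounds[of "gt d - k" k "T.G t"] by (simp add: \<rho>_def abs_mult mult_left_le)
    ultimately show ?thesis
      using H1(2)[of t] BQ[of "T.G t"] abs_triangle_ineq[of "H1 t" "\<beta> * \<rho> t"] abs_ge_zero[of \<beta>]
      by (auto simp: H_def)
  qed
  moreover have "uniformly_continuous_wrt gt {a..b} H"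
    using H_left H_right Q(1) by (intro uniformly_continuous_ramp_glue[OF H1(3) k])
      (auto intro: continuous_on_subset)
  moreover have H_left_integral: "T.g_integral H y = T.g_integral H1 y + \<beta> * T.g_integral \<rho> y"
    if "y \<le> d" for y
  proof -
    have "T.g_integral H y = (\<integral>t. indicator {a..<y} t * H1 t + \<beta> * (indicator {a..<y} t * \<rho> t) \<partial>T.\<mu>)"
      unfolding T.g_integral_def using that
      by (intro Bochner_Integration.integral_cong) (auto simp: H_def split: split_indicator)
    also have "\<dots> = T.g_integral H1 y + \<beta> * T.g_integral \<rho> y"
      unfolding T.g_integral_def
      by (subst Bochner_Integration.integral_add) (auto simp: \<rho>_def abs_le_iff ramp_bounds
        intro!: T.integrable_mu[OF H1(1) _ H1(2)] integrable_mult_right T.integrable_mu[where B = 1])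
    finally show ?thesis .
  qed
  moreover have "\<bar>T.g_integral H x - T.g_integral H1 x\<bar> < \<epsilon>" if "x \<in> {a..b}" "x \<le> d" for x
  proof -
    have "\<bar>\<beta> * T.g_integral \<rho> x\<bar> \<le> \<bar>\<beta>\<bar> * k"
      using \<rho>[of x] that by (simp add: abs_mult mult_left_mono)
    then show ?thesis using H_left_integral[OF that(2)] \<beta>k by simp
  qed
  moreover have "c + T.g_integral H x + J * H x = Tf (gt x)" if x: "x \<in> {a..b}" "d < x" for x
  proof -
    have "T.g_integral H x - T.g_integral H d = K (gt x) - K (gt d)"
      using x d K' H_right Q(1)
      by (intro T.g_integral_eq_antiderivative[OF gt _ _ _ \<open>H \<in> borel_measurable borel\<close>
          \<open>\<And>t. \<bar>H t\<bar> \<le> B1 + \<bar>\<beta>\<bar> + BQ\<close>]) auto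
    then have "T.g_integral H x = T.g_integral H1 d + \<beta> * m + K (gt x)"
      using H_left_integral[of d] K by (simp add: m_def)
    then show ?thesis
      using H_right[of x] ode[of "gt x"] gt_in[of x] x by (simp add: C_def algebra_simps)
  qed
  ultimately show ?thesis using that by blast
qed

lemma approximable_remove_jump:
  fixes f :: "real \<Rightarrow> real"
  assumes cont: "\<And>x. x \<in> {d<..b} \<Longrightarrow> continuous (at x within {a..b}) g" and J: "0 < J"
    and IH: "\<And>f. uniformly_continuous_wrt gt {a..b} f \<Longrightarrow> T.approximable f"
    and f: "uniformly_continuous_wrt g {a..b} f"
  shows "approximable f"
proof (rule approximableI_close)
  fix \<epsilon> :: real assume "\<epsilon> > 0"
  then have "\<epsilon>/2 > 0" by simp
  have gt: "continuous_on {d..b} gt"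
    by (rule continuous_on_gt[OF cont])
  have "uniformly_continuous_wrt gt {a..b} (\<lambda>x. f (max a (min d x)))"
    using d by (intro uniformly_continuous_wrt_clamp[OF f mono_on_gt, where J = 0]) (auto simp: gt_def)
  then obtain c H1 B1 L where H1: "H1 \<in> borel_measurable borel" "\<And>t. \<bar>H1 t\<bar> \<le> B1"
      "\<And>x y. x \<in> {a..b} \<Longrightarrow> y \<in> {a..b} \<Longrightarrow> \<bar>H1 x - H1 y\<bar> \<le> L * \<bar>gt x - gt y\<bar>"
    and left: "\<And>x. x \<in> {a..b} \<Longrightarrow> \<bar>f (max a (min d x)) - (c + T.g_integral H1 x)\<bar> < \<epsilon>/2"
    using T.approximable_imp_close_g_integral[OF IH \<open>\<epsilon>/2 > 0\<close>] by metis
  obtain F where F: "continuous_on UNIV F" and right: "\<And>x. x \<in> {a..b} \<Longrightarrow> d < x \<Longrightarrow> \<bar>f x - F (gt x)\<bar> < \<epsilon>"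
    using close_continuous_comp_gt[OF gt f \<open>\<epsilon> > 0\<close>] by blast
  obtain H B where H: "H \<in> borel_measurable borel" "\<And>t. \<bar>H t\<bar> \<le> B"
    "uniformly_continuous_wrt gt {a..b} H"
    and H_left: "\<And>x. x \<in> {a..b} \<Longrightarrow> x \<le> d \<Longrightarrow> \<bar>T.g_integral H x - T.g_integral H1 x\<bar> < \<epsilon>/2"
    and H_right: "\<And>x. x \<in> {a..b} \<Longrightarrow> d < x \<Longrightarrow> c + T.g_integral H x + J * H x = F (gt x)"
    using jump_correction[OF J gt H1 F \<open>\<epsilon>/2 > 0\<close>, of c] by blast
  have "\<bar>f x - (c + T.g_integral H x + (if d < x then J * H x else 0))\<bar> < \<epsilon>" if "x \<in> {a..b}" for x
  proof (cases "d < x")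
    case False
    then have "x \<le> d" by simp
    then show ?thesis
      using left[OF that] H_left[OF that \<open>x \<le> d\<close>] that by (simp add: min_absorb1, smt (verit))
  next
    case True
    then show ?thesis using right[OF that] H_right[OF that] by simp
  qed
  moreover have "approximable (\<lambda>x. c + T.g_integral H x + (if d < x then J * H x else 0))"
    using approximable_transfer[OF H(1,2) IH[OF H(3)]] .
  ultimately show "\<exists>\<phi>. approximable \<phi> \<and> (\<forall>x\<in>{a..b}. \<bar>f x - \<phi> x\<bar> < \<epsilon>)"
    by blast
qed

end

section \<open>Finitely many discontinuities\<close>

lemma approximable_if_finite_discontinuities:
  assumes "derivator a b g" "a \<le> b" "finite {x \<in> {a..b}. \<not> continuous (at x within {a..b}) g}"
    and "uniformly_continuous_wrt g {a..b} f"
  shows "derivator_interval.approximable a b g f"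
  using assms
proof (induction "card {x \<in> {a..b}. \<not> continuous (at x within {a..b}) g}" arbitrary: g f)
  case 0
  interpret derivator_interval a b g
    using 0 by unfold_locales
  have "continuous_on {a..b} g"
    using 0 unfolding continuous_on_eq_continuous_within by auto
  then show ?case
    using approximable_if_continuous 0 by blast
next
  case (Suc n)
  interpret derivator_interval a b g
    using Suc by unfold_locales
  define D where "D = {x \<in> {a..b}. \<not> continuous (at x within {a..b}) g}"
  have "finite D"
    using Suc unfolding D_def by auto
  moreover have "D \<noteq> {}"
    using Suc.hyps(2) unfolding D_def by (metis card.empty nat.distinct(1))
  define d where "d = Max D"
  have "d \<in> D" and d_max: "\<And>x. x \<in> D \<Longrightarrow> x \<le> d"
    using \<open>D \<noteq> {}\<close> \<open>finite D\<close> by (simp_all add: d_def)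
  have "continuous (at b within {a..b}) g"
    using derivator a_le_b unfolding derivator_def by auto
  then have "d < b" "a \<le> d" using \<open>d \<in> D\<close> by (auto simp: D_def less_le)
  then interpret derivator_jump a b g d
    by unfold_locales auto
  show ?case
  proof (rule approximable_remove_jump)
    show "continuous (at x within {a..b}) g" if "x \<in> {d<..b}" for x
      using d_max[of x] that \<open>a \<le> d\<close> by (auto simp: D_def)
    show "0 < J"
      using J_pos \<open>d \<in> D\<close> by (simp add: D_def)
    have "{x \<in> {a..b}. \<not> continuous (at x within {a..b}) gt} = D - {d}"
      using discontinuities_gt by (simp add: D_def)
    moreover have "card (D - {d}) = n"
      using Suc.hyps(2) \<open>finite D\<close> \<open>d \<in> D\<close> by (simp add: D_def)
    ultimately show "T.approximable h" if "uniformly_continuous_wrt gt {a..b} h" for h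
      using Suc.hyps(1)[OF _ derivator_gt a_le_b _ that] \<open>finite D\<close> by simp
  qed fact
qed

section \<open>Field-valued functions\<close>

definition broken_line :: "(nat \<Rightarrow> 'a::real_normed_vector) \<Rightarrow> real \<Rightarrow> real \<Rightarrow> nat \<Rightarrow> real \<Rightarrow> 'a" where
  "broken_line y u h N s = y 0 + (\<Sum>i<N. ramp (u + real i * h) h s *\<^sub>R (y (Suc i) - y i))"

lemma broken_line_top:
  assumes "h > 0" "u + real N * h \<le> s"
  shows "broken_line y u h N s = y N"
  using assms(2)
proof (induction N)
  case (Suc N)
  have "broken_line y u h (Suc N) s =
      broken_line y u h N s + ramp (u + real N * h) h s *\<^sub>R (y (Suc N) - y N)"
    by (simp add: broken_line_def)
  moreover have "broken_line y u h N s = y N" "ramp (u + real N * h) h s = 1"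
    using Suc assms(1) by (simp_all add: algebra_simps ramp_eq_1)
  ultimately show ?case by simp
qed (simp add: broken_line_def)

lemma broken_line_between:
  assumes h: "h > 0" and s: "u \<le> s" "s \<le> u + real (Suc N) * h"
  shows "\<exists>k \<theta>. k \<le> N \<and> u + real k * h \<le> s \<and> s \<le> u + real (Suc k) * h \<and> 0 \<le> \<theta> \<and> \<theta> \<le> 1 \<and>
    broken_line y u h (Suc N) s = y k + \<theta> *\<^sub>R (y (Suc k) - y k)"
  using s
proof (induction N)
  case 0
  then show ?case
    by (intro exI[of _ 0] exI[of _ "ramp u h s"]) (auto simp: broken_line_def ramp_bounds)
next
  case (Suc N)
  have step: "broken_line y u h (Suc (Suc N)) s = broken_line y u h (Suc N) s +
      ramp (u + real (Suc N) * h) h s *\<^sub>R (y (Suc (Suc N)) - y (Suc N))"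
    by (simp add: broken_line_def)
  show ?case
  proof (cases "s \<le> u + real (Suc N) * h")
    case True
    then show ?thesis
      using Suc.IH[OF Suc.prems(1) True] step ramp_eq_0[OF h True] by (metis add.right_neutral le_Suc_eq scale_zero_left)
  next
    case False
    then show ?thesis
      using step broken_line_top[OF h, where N = "Suc N" and s = s and y = y] Suc.prems ramp_bounds
      by (intro exI[of _ "Suc N"] exI[of _ "ramp (u + real (Suc N) * h) h s"]) auto
  qed
qed

lemma norm_diff_segment_lt:
  fixes z v w :: "'a::real_normed_vector"
  assumes "norm (z - v) < e" "norm (z - w) < e" "0 \<le> \<theta>" "\<theta> \<le> 1"
  shows "norm (z - (v + \<theta> *\<^sub>R (w - v))) < e"
proof -
  have "z - (v + \<theta> *\<^sub>R (w - v)) = (1 - \<theta>) *\<^sub>R (z - v) + \<theta> *\<^sub>R (z - w)"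
    by (simp add: algebra_simps)
  also have "norm \<dots> \<le> (1 - \<theta>) * norm (z - v) + \<theta> * norm (z - w)"
    using norm_triangle_ineq[of "(1 - \<theta>) *\<^sub>R (z - v)" "\<theta> *\<^sub>R (z - w)"] assms(3,4) by simp
  also have "\<dots> < e"
    using assms by (cases "\<theta> = 0") (auto intro: convex_bound_lt)
  finally show ?thesis .
qed

context derivator_interval
begin

definition centred_polys :: "(real \<Rightarrow> 'a::real_normed_field) set" where
  "centred_polys = {p. \<exists>C N. \<forall>x. p x = (\<Sum>n<N. C n * of_real (gm n x))}"

lemma centred_polys_add:
  assumes "p \<in> centred_polys" "q \<in> centred_polys" shows "(\<lambda>x. p x + q x) \<in> centred_polys"
proof -
  obtain C1 N1 C2 N2 where p: "\<And>x. p x = (\<Sum>n<N1. C1 n * of_real (gm n x))"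
    and q: "\<And>x. q x = (\<Sum>n<N2. C2 n * of_real (gm n x))"
    using assms by (auto simp: centred_polys_def)
  have pad: "(\<Sum>n<N. C n * of_real (gm n x)) = (\<Sum>n<max N1 N2. (if n < N then C n else 0) * of_real (gm n x))"
    if "N \<le> max N1 N2" for N C x
    using that by (intro sum.mono_neutral_cong_left) auto
  have "p x + q x = (\<Sum>n<max N1 N2. ((if n < N1 then C1 n else 0) + (if n < N2 then C2 n else 0)) *
      of_real (gm n x))" for x
    unfolding p q pad[of N1 C1 x, OF max.cobounded1] pad[of N2 C2 x, OF max.cobounded2]
    by (simp add: sum.distrib distrib_right)
  then show ?thesis
    unfolding centred_polys_def by (intro CollectI exI allI)
qed

lemma centred_polys_mult:
  assumes "p \<in> centred_polys" shows "(\<lambda>x. c * p x) \<in> centred_polys"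
proof -
  obtain C N where "\<And>x. p x = (\<Sum>n<N. C n * of_real (gm n x))"
    using assms by (auto simp: centred_polys_def)
  then have "c * p x = (\<Sum>n<N. (c * C n) * of_real (gm n x))" for x
    by (simp add: sum_distrib_left mult.assoc)
  then show ?thesis
    unfolding centred_polys_def by (intro CollectI exI allI)
qed

lemma centred_polys_of_real: "(\<lambda>x. of_real (\<Sum>n<N. q n * gm n x)) \<in> centred_polys"
proof -
  have "of_real (\<Sum>n<N. q n * gm n x) = (\<Sum>n<N. of_real (q n) * (of_real (gm n x) :: 'a))" for x
    by simp
  then show ?thesis
    unfolding centred_polys_def by (intro CollectI exI allI)
qed

lemma centred_polys_const: "(\<lambda>x. c) \<in> centred_polys"
proof -
  have "c = (\<Sum>n<1. c * of_real (gm n x))" for x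
    by simp
  then show ?thesis
    unfolding centred_polys_def by (intro CollectI exI allI)
qed

lemma centred_polys_sum:
  assumes "\<And>i. i \<in> I \<Longrightarrow> p i \<in> centred_polys"
  shows "(\<lambda>x. \<Sum>i\<in>I. p i x) \<in> centred_polys"
  using assms
proof (induction I rule: infinite_finite_induct)
  case (insert i I)
  then show ?case
    using centred_polys_add[of "p i" "\<lambda>x. \<Sum>i\<in>I. p i x"] by simp
qed (simp_all add: centred_polys_const[of 0])

lemma centred_polys_subset_g_polys: "centred_polys \<subseteq> g_polys a b g"
proof
  fix p :: "real \<Rightarrow> 'a" assume "p \<in> centred_polys"
  then obtain C N where p: "\<And>x. p x = (\<Sum>n<N. C n * of_real (gm n x))"
    by (auto simp: centred_polys_def)
  have "(\<Sum>(x0, n)\<in>{a} \<times> {..<N}. C n * of_real (g_mono a b g x0 n x)) = p x" for x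
    by (simp add: p sum.cartesian_product[symmetric])
  then show "p \<in> g_polys a b g"
    unfolding g_polys_def using a_le_b
    by (intro CollectI exI[of _ "{a} \<times> {..<N}"] exI[of _ "\<lambda>(x0, n). C n"]) auto
qed

lemma dense_centred_polys:
  fixes f :: "real \<Rightarrow> 'a::real_normed_field"
  assumes real: "\<And>h. uniformly_continuous_wrt g {a..b} h \<Longrightarrow> approximable h"
    and f: "uniformly_continuous_wrt g {a..b} f" and "\<epsilon> > 0"
  shows "\<exists>p\<in>centred_polys. \<forall>x\<in>{a..b}. norm (f x - p x) < \<epsilon>"
proof -
  obtain \<delta> where \<delta>: "\<delta> > 0"
    "\<And>x y. x \<in> {a..b} \<Longrightarrow> y \<in> {a..b} \<Longrightarrow> \<bar>g x - g y\<bar> < \<delta> \<Longrightarrow> norm (f x - f y) < \<epsilon>/2"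
    using uniformly_continuous_wrtD[OF f, of "\<epsilon>/2"] \<open>\<epsilon> > 0\<close> by auto
  define h where "h = \<delta> / 4"
  have h: "h > 0" using \<delta>(1) by (simp add: h_def)
  define N where "N = nat \<lceil>(g b - g a) / h\<rceil>"
  have "(g b - g a) / h \<le> real N"
    unfolding N_def by linarith
  then have g_range: "g a \<le> g x" "g x \<le> g a + real (Suc N) * h" if "x \<in> {a..b}" for x
    using h that g_mono_le[of a x] g_mono_le[of x b] a_le_b by (auto simp: field_simps)
  define y where "y i = f (SOME x. x \<in> {a..b} \<and> \<bar>g x - (g a + real i * h)\<bar> \<le> h)" for i
  have y: "norm (f x - y i) < \<epsilon>/2" if "x \<in> {a..b}" "\<bar>g x - (g a + real i * h)\<bar> \<le> h" for x i
  proof -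
    define \<xi> where "\<xi> = (SOME x. x \<in> {a..b} \<and> \<bar>g x - (g a + real i * h)\<bar> \<le> h)"
    have "\<xi> \<in> {a..b}" "\<bar>g \<xi> - (g a + real i * h)\<bar> \<le> h"
      using someI[of "\<lambda>x. x \<in> {a..b} \<and> \<bar>g x - (g a + real i * h)\<bar> \<le> h"] that unfolding \<xi>_def by blast+
    moreover have "\<bar>g x - g \<xi>\<bar> < \<delta>"
      using calculation(2) that(2) \<delta>(1) unfolding h_def by arith
    ultimately show ?thesis using \<delta>(2)[of x \<xi>] that(1) by (simp add: y_def \<xi>_def)
  qed
  define S where "S = (\<Sum>i<Suc N. norm (y (Suc i) - y i))"
  have "0 \<le> S" unfolding S_def by (intro sum_nonneg) auto
  define \<eta> where "\<eta> = \<epsilon> / (2 * (S + 1))"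
  have \<eta>: "\<eta> > 0" "S * \<eta> < \<epsilon>/2"
    using \<open>\<epsilon> > 0\<close> \<open>0 \<le> S\<close> by (auto simp: \<eta>_def field_simps)
  have "approximable (\<lambda>x. ramp (g a + real i * h) h (g x))" for i
    using ramp_lipschitz[OF h] h
    by (intro real uniformly_continuous_wrt_lipschitz[where L = "1 / h"]) simp
  then have "\<forall>i. \<exists>q M. \<forall>x\<in>{a..b}. \<bar>ramp (g a + real i * h) h (g x) - (\<Sum>n<M. q n * gm n x)\<bar> < \<eta>"
    using \<eta>(1) unfolding approximable_def by blast
  then obtain q M where qM: "\<And>i x. x \<in> {a..b} \<Longrightarrow>
      \<bar>ramp (g a + real i * h) h (g x) - (\<Sum>n<M i. q i n * gm n x)\<bar> < \<eta>"
    by metis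
  define p where "p x = y 0 + (\<Sum>i<Suc N. (y (Suc i) - y i) * of_real (\<Sum>n<M i. q i n * gm n x))" for x
  have "p \<in> centred_polys"
    unfolding p_def[abs_def]
    by (intro centred_polys_add centred_polys_const centred_polys_sum centred_polys_mult centred_polys_of_real)
  moreover have "norm (f x - p x) < \<epsilon>" if x: "x \<in> {a..b}" for x
  proof -
    obtain k \<theta> where k: "g a + real k * h \<le> g x" "g x \<le> g a + real (Suc k) * h" "0 \<le> \<theta>" "\<theta> \<le> 1"
      and line: "broken_line y (g a) h (Suc N) (g x) = y k + \<theta> *\<^sub>R (y (Suc k) - y k)"
      using broken_line_between[OF h g_range[OF x], of y] by blast
    have "\<bar>g x - (g a + real k * h)\<bar> \<le> h" "\<bar>g x - (g a + real (Suc k) * h)\<bar> \<le> h"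
      using k(1,2) h by (simp_all add: abs_le_iff algebra_simps)
    then have "norm (f x - broken_line y (g a) h (Suc N) (g x)) < \<epsilon>/2"
      unfolding line using k(3,4) by (intro norm_diff_segment_lt y x)
    moreover have "norm (broken_line y (g a) h (Suc N) (g x) - p x) \<le> S * \<eta>"
    proof -
      let ?e = "\<lambda>i. ramp (g a + real i * h) h (g x) - (\<Sum>n<M i. q i n * gm n x)"
      have "broken_line y (g a) h (Suc N) (g x) - p x = (\<Sum>i<Suc N. ramp (g a + real i * h) h (g x) *\<^sub>R
          (y (Suc i) - y i) - (y (Suc i) - y i) * of_real (\<Sum>n<M i. q i n * gm n x))"
        by (simp add: broken_line_def p_def sum_subtractf)
      also have "\<dots> = (\<Sum>i<Suc N. (y (Suc i) - y i) * of_real (?e i))"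
        by (intro sum.cong refl) (simp add: scaleR_conv_of_real algebra_simps)
      also have "norm \<dots> \<le> (\<Sum>i<Suc N. norm (y (Suc i) - y i) * \<eta>)"
      proof (rule order_trans[OF norm_sum sum_mono])
        fix i
        have "\<bar>?e i\<bar> \<le> \<eta>" using qM[OF x, of i] by simp
        then show "norm ((y (Suc i) - y i) * of_real (?e i)) \<le> norm (y (Suc i) - y i) * \<eta>"
          by (simp add: norm_mult mult_left_mono del: of_real_diff)
      qed
      finally show ?thesis by (simp only: S_def sum_distrib_right)
    qed
    ultimately show ?thesis
      using \<eta>(2) norm_triangle_ineq[of "f x - broken_line y (g a) h (Suc N) (g x)"
          "broken_line y (g a) h (Suc N) (g x) - p x"] by simp
  qed
  ultimately show ?thesis by blast
qed

end

theorem mainTheorem15: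
  fixes a b :: real and g :: "real \<Rightarrow> real"
  assumes "derivator a b g"
    and "finite {x \<in> {a..b}. \<not> continuous (at x within {a..b}) g}"
  shows "\<forall>f \<in> (UC_g a b g :: (real \<Rightarrow> 'a::real_normed_field) set). \<forall>\<epsilon>>0.
           \<exists>p \<in> g_polys a b g. \<forall>x\<in>{a..b}. norm (f x - p x) < \<epsilon>"
proof (intro ballI allI impI)
  fix f :: "real \<Rightarrow> 'a" and \<epsilon> :: real
  assume f: "f \<in> UC_g a b g" and "\<epsilon> > 0"
  show "\<exists>p \<in> g_polys a b g. \<forall>x\<in>{a..b}. norm (f x - p x) < \<epsilon>"
  proof (cases "a \<le> b")
    case False
    have "(\<lambda>x. 0) \<in> g_polys a b g"
      unfolding g_polys_def by (intro CollectI exI[of _ "{}"]) auto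
    then show ?thesis using False by auto
  next
    case True
    interpret derivator_interval a b g
      using assms(1) True by unfold_locales
    have "uniformly_continuous_wrt g {a..b} f"
      using f by (simp add: UC_g_eq)
    then obtain p where "p \<in> centred_polys" "\<forall>x\<in>{a..b}. norm (f x - p x) < \<epsilon>"
      using dense_centred_polys[OF approximable_if_finite_discontinuities[OF assms(1) True assms(2)]]
        \<open>\<epsilon> > 0\<close> by blast
    then show ?thesis
      using centred_polys_subset_g_polys by blast
  qed
qed

end
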